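(* For the symmetric two-user Gaussian broadcast channel with feedback with parameters $(\sigma_s^2,\rho_s,\sigma_z^2,\rho_z)$ and every $0<D\le\sigma_s^2$, let $D_{\mathrm{th}}=\frac{\sigma_s^2(2-\rho_z-|\rho_s|)}{2-\rho_z}$. Then $E(D)\le E_{\mathrm{OL}}(D)$ (indeed the minimal energy per source-pair sample required by the uncoded joint source-channel Ozarow–Leung-type linear feedback scheme is at most $E_{\mathrm{OL}}(D)$), where $$E_{\mathrm{OL}}(D)=\frac{2\sigma_z^2}{3-\rho_z}\log\!\Big(\frac{\sigma_s^2(1+|\rho_s|)}{D+(2-\rho_z)(D-\sigma_s^2)+\sigma_s^2|\rho_s|}\Big)\quad\text{if } D\ge D_{\mathrm{th}},$$ $$E_{\mathrm{OL}}(D)=2\sigma_z^2\Big(\log\!\Big(\frac{(2-\rho_z-|\rho_s|)\sigma_s^2}{(2-\rho_z)D}\Big)+\frac{1}{3-\rho_z}\log\!\Big(\frac{(2-\rho_z)(1+|\rho_s|)}{2-\rho_z-|\rho_s|}\Big)\Big)\quad\text{if } D<D_{\mathrm{th}},$$ with $\log$ the natural logarithm.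
   Context: Setup: An encoder observes $m$ i.i.d. pairs $(S_{1,j},S_{2,j})\sim\mathcal N(0,\mathsf Q_s)$, $j=1,\dots,m$, with $\mathsf Q_s=\sigma_s^2\begin{pmatrix}1&\rho_s\\\rho_s&1\end{pmatrix}$, $|\rho_s|<1$. The channel is used $n$ times; at time $k$, receiver $i\in\{1,2\}$ observes $Y_{i,k}=X_k+Z_{i,k}$, where the pairs $(Z_{1,k},Z_{2,k})\sim\mathcal N(0,\mathsf Q_z)$ are i.i.d. over $k$ and independent of the sources, $\mathsf Q_z=\sigma_z^2\begin{pmatrix}1&\rho_z\\\rho_z&1\end{pmatrix}$, $|\rho_z|<1$; all signals are real. The encoder has noiseless causal feedback of both outputs: $X_k=f_k(S_{1,1}^m,S_{2,1}^m,\mathbf Y_1,\dots,\mathbf Y_{k-1})$ with $\mathbf Y_k=(Y_{1,k},Y_{2,k})$. Receiver $i$ outputs $\hat S_{i,1}^m=g_i(Y_{i,1}^n)$. A $(D,E,m,n)$ code is a collection $\{f_k\}_{k=1}^n,g_1,g_2$ with $\sum_{j=1}^m\mathbb E[(S_{i,j}-\hat S_{i,j})^2]\le mD$ for $i=1,2$ and $\sum_{k=1}^n\mathbb E[X_k^2]\le mE$. The energy-distortion tradeoff $E(D)$ is the minimal $E$ such that for every $\epsilon>0$ there exist $m,n$ and a $(D+\epsilon,E+\epsilon,m,n)$ code. *)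

theory Defs
  imports "HOL-Probability.Probability"
begin

text \<open>Bivariate centred Gaussian with covariance matrix
  v * [[1, r], [r, 1]] (v = sigma squared), given by its density on the plane.\<close>
definition bvn_density :: "real \<Rightarrow> real \<Rightarrow> real \<times> real \<Rightarrow> ennreal" where
  "bvn_density v r = (\<lambda>(x, y). ennreal
     (1 / (2 * pi * v * sqrt (1 - r\<^sup>2)) *
      exp (- (x\<^sup>2 - 2 * r * x * y + y\<^sup>2) / (2 * v * (1 - r\<^sup>2)))))"

definition bvn :: "real \<Rightarrow> real \<Rightarrow> (real \<times> real) measure" where
  "bvn v r = density (lborel \<Otimes>\<^sub>M lborel) (bvn_density v r)"

definition src_noise_space :: "real \<Rightarrow> real \<Rightarrow> real \<Rightarrow> real \<Rightarrow> nat \<Rightarrow> nat \<Rightarrow>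
    ((nat \<Rightarrow> real \<times> real) \<times> (nat \<Rightarrow> real \<times> real)) measure" where
  "src_noise_space vs rs vz rz m n =
     (PiM {..<m} (\<lambda>_. bvn vs rs)) \<Otimes>\<^sub>M (PiM {..<n} (\<lambda>_. bvn vz rz))"

type_synonym encoder = "nat \<Rightarrow> (nat \<Rightarrow> real \<times> real) \<Rightarrow> (nat \<Rightarrow> real \<times> real) \<Rightarrow> real"

text \<open>Feedback outputs: fb_out f s z k is the function i \<mapsto> (Y_{1,i}, Y_{2,i}) for i < k
  and (0,0) for i \<ge> k.  The encoder at time k sees the sources s and the past outputs only.\<close>
fun fb_out :: "encoder \<Rightarrow> (nat \<Rightarrow> real \<times> real) \<Rightarrow> (nat \<Rightarrow> real \<times> real) \<Rightarrow> nat \<Rightarrow> (nat \<Rightarrow> real \<times> real)" where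
  "fb_out f s z 0 = (\<lambda>_. (0, 0))"
| "fb_out f s z (Suc k) =
     (let x = f k s (fb_out f s z k)
      in (fb_out f s z k)(k := (x + fst (z k), x + snd (z k))))"

definition chan_in :: "encoder \<Rightarrow> (nat \<Rightarrow> real \<times> real) \<Rightarrow> (nat \<Rightarrow> real \<times> real) \<Rightarrow> nat \<Rightarrow> real" where
  "chan_in f s z k = f k s (fb_out f s z k)"

definition rx1 :: "encoder \<Rightarrow> nat \<Rightarrow> (nat \<Rightarrow> real \<times> real) \<Rightarrow> (nat \<Rightarrow> real \<times> real) \<Rightarrow> nat \<Rightarrow> real" where
  "rx1 f n s z = (\<lambda>k. if k < n then fst (fb_out f s z n k) else 0)"

definition rx2 :: "encoder \<Rightarrow> nat \<Rightarrow> (nat \<Rightarrow> real \<times> real) \<Rightarrow> (nat \<Rightarrow> real \<times> real) \<Rightarrow> nat \<Rightarrow> real" where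
  "rx2 f n s z = (\<lambda>k. if k < n then snd (fb_out f s z n k) else 0)"

definition is_code :: "real \<Rightarrow> real \<Rightarrow> real \<Rightarrow> real \<Rightarrow> real \<Rightarrow> real \<Rightarrow> nat \<Rightarrow> nat \<Rightarrow>
    encoder \<Rightarrow> ((nat \<Rightarrow> real) \<Rightarrow> nat \<Rightarrow> real) \<Rightarrow> ((nat \<Rightarrow> real) \<Rightarrow> nat \<Rightarrow> real) \<Rightarrow> bool" where
  "is_code vs rs vz rz D E m n f g1 g2 \<longleftrightarrow>
     (let M = src_noise_space vs rs vz rz m n;
          X = (\<lambda>k \<omega>. chan_in f (fst \<omega>) (snd \<omega>) k);
          err1 = (\<lambda>j \<omega>. (fst (fst \<omega> j) - g1 (rx1 f n (fst \<omega>) (snd \<omega>)) j)\<^sup>2);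
          err2 = (\<lambda>j \<omega>. (snd (fst \<omega> j) - g2 (rx2 f n (fst \<omega>) (snd \<omega>)) j)\<^sup>2)
      in (\<forall>k<n. integrable M (\<lambda>\<omega>. (X k \<omega>)\<^sup>2))
       \<and> (\<Sum>k<n. \<integral>\<omega>. (X k \<omega>)\<^sup>2 \<partial>M) \<le> real m * E
       \<and> (\<forall>j<m. integrable M (err1 j)) \<and> (\<Sum>j<m. \<integral>\<omega>. err1 j \<omega> \<partial>M) \<le> real m * D
       \<and> (\<forall>j<m. integrable M (err2 j)) \<and> (\<Sum>j<m. \<integral>\<omega>. err2 j \<omega> \<partial>M) \<le> real m * D)"

definition achievable :: "real \<Rightarrow> real \<Rightarrow> real \<Rightarrow> real \<Rightarrow> real \<Rightarrow> real \<Rightarrow> bool" where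
  "achievable vs rs vz rz D E \<longleftrightarrow>
     (\<forall>\<epsilon>>0. \<exists>m n f g1 g2. 0 < m \<and> 0 < n \<and> is_code vs rs vz rz (D + \<epsilon>) (E + \<epsilon>) m n f g1 g2)"

definition energy_distortion :: "real \<Rightarrow> real \<Rightarrow> real \<Rightarrow> real \<Rightarrow> real \<Rightarrow> real" where
  "energy_distortion vs rs vz rz D = Inf {E. achievable vs rs vz rz D E}"

definition D_th :: "real \<Rightarrow> real \<Rightarrow> real \<Rightarrow> real" where
  "D_th vs rs rz = vs * (2 - rz - \<bar>rs\<bar>) / (2 - rz)"

definition E_OL :: "real \<Rightarrow> real \<Rightarrow> real \<Rightarrow> real \<Rightarrow> real \<Rightarrow> real" where
  "E_OL vs rs vz rz D =
     (if D \<ge> D_th vs rs rz then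
        2 * vz / (3 - rz) * ln (vs * (1 + \<bar>rs\<bar>) / (D + (2 - rz) * (D - vs) + vs * \<bar>rs\<bar>))
      else
        2 * vz * (ln ((2 - rz - \<bar>rs\<bar>) * vs / ((2 - rz) * D))
                  + 1 / (3 - rz) * ln ((2 - rz) * (1 + \<bar>rs\<bar>) / (2 - rz - \<bar>rs\<bar>))))"

end

theory Submission
  imports Defs
begin

(* The bound is attained by an Ozarow-Leung type linear feedback scheme for a
   single source pair.  Through the feedback the encoder knows both receivers' current
   estimation errors and sends their sign-aligned sum at power P; each receiver corrects its
   estimate linearly.  All errors are linear in the Gaussian source and noise, so their second
   moments follow a deterministic recursion for the common error variance alpha_k and the error
   covariance c_k.  With t = P / (P + sigma_z^2), while the correlation rho = |c| / alpha is large
   every step raises ln ((2 - rho_z - rho) / (1 + rho)) by about t (3 - rho_z) / 2 at cost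
   P ~ sigma_z^2 t; afterwards alpha shrinks by the factor 1 - t / 2 per step, and
   (2 - rho_z) alpha - |c| never increases.  Adding the costs of the two phases and letting
   t -> 0 gives E_OL(D). *)

section \<open>Moments of the bivariate normal distribution\<close>

lemma has_bochner_integral_normal_quadratic:
  assumes "\<sigma> > 0"
  shows "has_bochner_integral lborel (\<lambda>y. normal_density \<mu> \<sigma> y * (a + b * y + c * y\<^sup>2))
           (a + b * \<mu> + c * (\<sigma>\<^sup>2 + \<mu>\<^sup>2))"
proof -
  have mass: "has_bochner_integral lborel (normal_density \<mu> \<sigma>) 1"
    using assms by (simp add: has_bochner_integral_iff)
  have variance: "has_bochner_integral lborel (\<lambda>y. normal_density \<mu> \<sigma> y * (y - \<mu>)\<^sup>2) (\<sigma>\<^sup>2)"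
    using normal_moment_even[OF assms, of \<mu> 1] assms by simp
  have "has_bochner_integral lborel (\<lambda>y. a * normal_density \<mu> \<sigma> y + b * (normal_density \<mu> \<sigma> y * y)
     + c * (normal_density \<mu> \<sigma> y * (y - \<mu>)\<^sup>2 + (2 * \<mu>) * (normal_density \<mu> \<sigma> y * y)
            - \<mu>\<^sup>2 * normal_density \<mu> \<sigma> y))
     (a * 1 + b * \<mu> + c * (\<sigma>\<^sup>2 + (2 * \<mu>) * \<mu> - \<mu>\<^sup>2 * 1))"
    by (intro has_bochner_integral_add has_bochner_integral_mult_right has_bochner_integral_diff
          mass variance normal_moment_nz_1[OF assms])
  then show ?thesis
    by (rule has_bochner_integral_cong[THEN iffD1, rotated -1])
       (auto simp: algebra_simps power2_eq_square)
qed

text \<open>The bivariate normal density factored as the \<open>N(0, v)\<close> density of \<open>x\<close> times the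
  conditional \<open>N(r x, v (1 - r\<^sup>2))\<close> density of \<open>y\<close>; in this form iterated integrals reduce
  to one-dimensional normal moments.\<close>
definition bvn_pdf :: "real \<Rightarrow> real \<Rightarrow> real \<times> real \<Rightarrow> real" where
  "bvn_pdf v r p =
     normal_density 0 (sqrt v) (fst p) * normal_density (r * fst p) (sqrt (v * (1 - r\<^sup>2))) (snd p)"

lemma bvn_pdf_nonneg: "0 \<le> bvn_pdf v r p"
  by (simp add: bvn_pdf_def)

lemma borel_measurable_bvn_pdf[measurable]: "bvn_pdf v r \<in> borel_measurable (lborel \<Otimes>\<^sub>M lborel)"
  unfolding bvn_pdf_def[abs_def] normal_density_def by measurable

lemma bvn_density_eq_bvn_pdf:
  assumes v: "v > 0" and r: "\<bar>r\<bar> < 1"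
  shows "bvn_density v r = (\<lambda>p. ennreal (bvn_pdf v r p))"
proof
  fix p :: "real \<times> real"
  obtain x y where p: "p = (x, y)" by force
  have q: "0 < 1 - r\<^sup>2" using r by (simp add: abs_square_less_1)
  have s1: "(sqrt v)\<^sup>2 = v" and s2: "(sqrt (v * (1 - r\<^sup>2)))\<^sup>2 = v * (1 - r\<^sup>2)"
    using v q by simp_all
  have const: "1 / sqrt (2 * pi * v) * (1 / sqrt (2 * pi * (v * (1 - r\<^sup>2))))
      = 1 / (2 * pi * v * sqrt (1 - r\<^sup>2))"
  proof -
    have "sqrt (2 * pi * v) * sqrt (2 * pi * (v * (1 - r\<^sup>2))) = sqrt ((2 * pi * v)\<^sup>2 * (1 - r\<^sup>2))"
      by (simp add: real_sqrt_mult[symmetric] power2_eq_square algebra_simps)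
    also have "\<dots> = 2 * pi * v * sqrt (1 - r\<^sup>2)" using v by (simp add: real_sqrt_mult)
    finally show ?thesis by (simp add: field_simps)
  qed
  have expo: "- (x - 0)\<^sup>2 / (2 * v) + - (y - r * x)\<^sup>2 / (2 * (v * (1 - r\<^sup>2)))
      = - (x\<^sup>2 - 2 * r * x * y + y\<^sup>2) / (2 * v * (1 - r\<^sup>2))"
    using v q by (simp add: field_simps power2_eq_square)
  have "bvn_pdf v r p = 1 / sqrt (2 * pi * v) * (1 / sqrt (2 * pi * (v * (1 - r\<^sup>2))))
      * exp (- (x - 0)\<^sup>2 / (2 * v) + - (y - r * x)\<^sup>2 / (2 * (v * (1 - r\<^sup>2))))"
    unfolding bvn_pdf_def normal_density_def p s1 s2 by (simp add: exp_diff exp_minus field_simps)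
  then show "bvn_density v r p = ennreal (bvn_pdf v r p)"
    unfolding const expo by (simp add: bvn_density_def p)
qed

lemma has_bochner_integral_bvn_pdf_section:
  assumes v: "v > 0" and r: "\<bar>r\<bar> < 1"
  shows "has_bochner_integral lborel (\<lambda>y. bvn_pdf v r (x, y) * (a + b * y + c * y\<^sup>2))
     (normal_density 0 (sqrt v) x * (a + b * (r * x) + c * (v * (1 - r\<^sup>2) + (r * x)\<^sup>2)))"
proof -
  have q: "0 < 1 - r\<^sup>2" using r by (simp add: abs_square_less_1)
  then have "sqrt (v * (1 - r\<^sup>2)) > 0" and "(sqrt (v * (1 - r\<^sup>2)))\<^sup>2 = v * (1 - r\<^sup>2)"
    using v by simp_all
  from this(2) has_bochner_integral_mult_right[OF has_bochner_integral_normal_quadratic[OF this(1)],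
      of "normal_density 0 (sqrt v) x"]
  show ?thesis by (simp add: bvn_pdf_def mult.assoc)
qed

lemma integrable_bvn_pdf_quadratic_weight:
  assumes v: "v > 0" and r: "\<bar>r\<bar> < 1"
  shows "integrable (lborel \<Otimes>\<^sub>M lborel) (\<lambda>p. bvn_pdf v r p * (1 + (fst p)\<^sup>2 + (snd p)\<^sup>2))"
proof (rule lborel_pair.Fubini_integrable)
  have inner: "(\<integral>y. \<bar>bvn_pdf v r (x, y) * (1 + x\<^sup>2 + y\<^sup>2)\<bar> \<partial>lborel)
     = normal_density 0 (sqrt v) x * ((1 + v * (1 - r\<^sup>2)) + (1 + r\<^sup>2) * x\<^sup>2)" for x
  proof -
    have "(\<integral>y. \<bar>bvn_pdf v r (x, y) * (1 + x\<^sup>2 + y\<^sup>2)\<bar> \<partial>lborel)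
       = (\<integral>y. bvn_pdf v r (x, y) * ((1 + x\<^sup>2) + 0 * y + 1 * y\<^sup>2) \<partial>lborel)"
      by (rule Bochner_Integration.integral_cong) (simp_all add: bvn_pdf_nonneg)
    also have "\<dots> = normal_density 0 (sqrt v) x * ((1 + x\<^sup>2) + 0 * (r * x) + 1 * (v * (1 - r\<^sup>2) + (r * x)\<^sup>2))"
      using has_bochner_integral_bvn_pdf_section[OF v r] by (rule has_bochner_integral_integral_eq)
    finally show ?thesis by (simp add: algebra_simps power2_eq_square)
  qed
  have "sqrt v > 0" using v by simp
  from integrable.intros[OF has_bochner_integral_normal_quadratic[OF this, of 0 "1 + v * (1 - r\<^sup>2)" 0]]
  have "integrable lborel (\<lambda>x. normal_density 0 (sqrt v) x * ((1 + v * (1 - r\<^sup>2)) + 0 * x + (1 + r\<^sup>2) * x\<^sup>2))" .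
  then show "integrable lborel (\<lambda>x. \<integral>y. norm (bvn_pdf v r (x, y) * (1 + (fst (x, y))\<^sup>2 + (snd (x, y))\<^sup>2)) \<partial>lborel)"
    by (simp add: inner)
  have "integrable lborel (\<lambda>y. bvn_pdf v r (x, y) * ((1 + x\<^sup>2) + 0 * y + 1 * y\<^sup>2))" for x
    using has_bochner_integral_bvn_pdf_section[OF v r] by (rule integrable.intros)
  then show "AE x in lborel. integrable lborel (\<lambda>y. bvn_pdf v r (x, y) * (1 + (fst (x, y))\<^sup>2 + (snd (x, y))\<^sup>2))"
    by simp
qed (measurable)

lemma abs_quadratic_le:
  fixes x y :: real
  shows "\<bar>A + B * x + C * x\<^sup>2 + D * y + E * (x * y) + F * y\<^sup>2\<bar>
    \<le> (\<bar>A\<bar> + \<bar>B\<bar> + \<bar>C\<bar> + \<bar>D\<bar> + \<bar>E\<bar> + \<bar>F\<bar>) * (1 + x\<^sup>2 + y\<^sup>2)"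
proof -
  let ?W = "1 + x\<^sup>2 + y\<^sup>2"
  have monomial_bound: "\<bar>c * m\<bar> \<le> \<bar>c\<bar> * ?W" if "\<bar>m\<bar> \<le> ?W" for c m :: real
    using that by (simp add: abs_mult mult_left_mono)
  have "\<bar>x\<bar> \<le> ?W" "\<bar>y\<bar> \<le> ?W" "\<bar>x * y\<bar> \<le> ?W"
    using sum_squares_bound[of "\<bar>x\<bar>" 1] sum_squares_bound[of "\<bar>y\<bar>" 1]
      sum_squares_bound[of "\<bar>x\<bar>" "\<bar>y\<bar>"]
    by (simp_all add: abs_mult) (smt (verit) zero_le_power2)+
  then have "\<bar>A * 1\<bar> \<le> \<bar>A\<bar> * ?W" "\<bar>B * x\<bar> \<le> \<bar>B\<bar> * ?W" "\<bar>C * x\<^sup>2\<bar> \<le> \<bar>C\<bar> * ?W"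
    "\<bar>D * y\<bar> \<le> \<bar>D\<bar> * ?W" "\<bar>E * (x * y)\<bar> \<le> \<bar>E\<bar> * ?W" "\<bar>F * y\<^sup>2\<bar> \<le> \<bar>F\<bar> * ?W"
    by (intro monomial_bound; simp)+
  then show ?thesis
    by (simp add: distrib_right) (smt (verit))
qed

lemma integrable_bvn_pdf_quadratic:
  assumes v: "v > 0" and r: "\<bar>r\<bar> < 1"
  shows "integrable (lborel \<Otimes>\<^sub>M lborel)
    (\<lambda>p. bvn_pdf v r p * (A + B * fst p + C * (fst p)\<^sup>2 + D * snd p + E * (fst p * snd p) + F * (snd p)\<^sup>2))"
    (is "integrable _ ?g")
proof (rule Bochner_Integration.integrable_bound)
  let ?K = "\<bar>A\<bar> + \<bar>B\<bar> + \<bar>C\<bar> + \<bar>D\<bar> + \<bar>E\<bar> + \<bar>F\<bar>"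
  show "integrable (lborel \<Otimes>\<^sub>M lborel) (\<lambda>p. ?K * (bvn_pdf v r p * (1 + (fst p)\<^sup>2 + (snd p)\<^sup>2)))"
    using integrable_bvn_pdf_quadratic_weight[OF v r] by simp
  show "AE p in lborel \<Otimes>\<^sub>M lborel. norm (?g p) \<le> norm (?K * (bvn_pdf v r p * (1 + (fst p)\<^sup>2 + (snd p)\<^sup>2)))"
  proof (rule AE_I2)
    fix p :: "real \<times> real"
    have "bvn_pdf v r p * \<bar>A + B * fst p + C * (fst p)\<^sup>2 + D * snd p + E * (fst p * snd p) + F * (snd p)\<^sup>2\<bar>
        \<le> bvn_pdf v r p * (?K * (1 + (fst p)\<^sup>2 + (snd p)\<^sup>2))"
      by (rule mult_left_mono[OF abs_quadratic_le bvn_pdf_nonneg])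
    then show "norm (?g p) \<le> norm (?K * (bvn_pdf v r p * (1 + (fst p)\<^sup>2 + (snd p)\<^sup>2)))"
      by (simp add: abs_mult bvn_pdf_nonneg mult_ac)
  qed
qed measurable

lemma has_bochner_integral_bvn_pdf_quadratic:
  assumes v: "v > 0" and r: "\<bar>r\<bar> < 1"
  shows "has_bochner_integral (lborel \<Otimes>\<^sub>M lborel)
    (\<lambda>p. bvn_pdf v r p * (A + B * fst p + C * (fst p)\<^sup>2 + D * snd p + E * (fst p * snd p) + F * (snd p)\<^sup>2))
    (A + C * v + E * r * v + F * v)"
proof -
  let ?g = "\<lambda>p. bvn_pdf v r p * (A + B * fst p + C * (fst p)\<^sup>2 + D * snd p + E * (fst p * snd p) + F * (snd p)\<^sup>2)"
  note int = integrable_bvn_pdf_quadratic[OF v r, of A B C D E F]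
  have "(\<integral>p. ?g p \<partial>(lborel \<Otimes>\<^sub>M lborel)) = (\<integral>x. (\<integral>y. ?g (x, y) \<partial>lborel) \<partial>lborel)"
    using lborel_pair.integral_fst'[OF int] by simp
  also have "\<dots> = (\<integral>x. normal_density 0 (sqrt v) x * ((A + F * (v * (1 - r\<^sup>2)))
       + (B + D * r) * x + (C + E * r + F * r\<^sup>2) * x\<^sup>2) \<partial>lborel)"
  proof (rule Bochner_Integration.integral_cong[OF refl])
    fix x
    have "(\<integral>y. ?g (x, y) \<partial>lborel)
        = (\<integral>y. bvn_pdf v r (x, y) * ((A + B * x + C * x\<^sup>2) + (D + E * x) * y + F * y\<^sup>2) \<partial>lborel)"
      by (rule Bochner_Integration.integral_cong[OF refl]) (simp add: algebra_simps)
    also have "\<dots> = normal_density 0 (sqrt v) x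
        * ((A + B * x + C * x\<^sup>2) + (D + E * x) * (r * x) + F * (v * (1 - r\<^sup>2) + (r * x)\<^sup>2))"
      using has_bochner_integral_bvn_pdf_section[OF v r] by (rule has_bochner_integral_integral_eq)
    finally show "(\<integral>y. ?g (x, y) \<partial>lborel) = normal_density 0 (sqrt v) x * ((A + F * (v * (1 - r\<^sup>2)))
       + (B + D * r) * x + (C + E * r + F * r\<^sup>2) * x\<^sup>2)"
      by (simp add: algebra_simps power2_eq_square)
  qed
  also have "\<dots> = (A + F * (v * (1 - r\<^sup>2))) + (C + E * r + F * r\<^sup>2) * v"
    using has_bochner_integral_normal_quadratic[of "sqrt v" 0] v
    by (intro has_bochner_integral_integral_eq) simp
  also have "\<dots> = A + C * v + E * r * v + F * v"
    by (simp add: algebra_simps)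
  finally show ?thesis
    using int by (simp add: has_bochner_integral_iff)
qed

lemma sets_bvn[measurable_cong, simp]: "sets (bvn v r) = sets (lborel \<Otimes>\<^sub>M lborel)"
  by (simp add: bvn_def)

lemma space_bvn[simp]: "space (bvn v r) = UNIV"
  by (simp add: bvn_def space_pair_measure)

lemma has_bochner_integral_bvn_quadratic:
  assumes "v > 0" and "\<bar>r\<bar> < 1"
  shows "has_bochner_integral (bvn v r)
    (\<lambda>p. A + B * fst p + C * (fst p)\<^sup>2 + D * snd p + E * (fst p * snd p) + F * (snd p)\<^sup>2)
    (A + C * v + E * r * v + F * v)"
  unfolding bvn_def bvn_density_eq_bvn_pdf[OF assms]
  by (rule has_bochner_integral_density)
     (auto simp: bvn_pdf_nonneg intro: has_bochner_integral_bvn_pdf_quadratic[OF assms])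

lemma prob_space_bvn:
  assumes v: "v > 0" and r: "\<bar>r\<bar> < 1"
  shows "prob_space (bvn v r)"
proof (rule prob_spaceI)
  have pdf: "has_bochner_integral (lborel \<Otimes>\<^sub>M lborel) (bvn_pdf v r) 1"
    using has_bochner_integral_bvn_pdf_quadratic[OF v r, of 1 0 0 0 0 0] by simp
  have "emeasure (bvn v r) (space (bvn v r)) = (\<integral>\<^sup>+ p. ennreal (bvn_pdf v r p) \<partial>(lborel \<Otimes>\<^sub>M lborel))"
    unfolding bvn_def bvn_density_eq_bvn_pdf[OF v r]
    using sets.top[of "lborel \<Otimes>\<^sub>M lborel :: (real \<times> real) measure"]
    by (subst emeasure_density) (auto simp: space_pair_measure)
  also have "\<dots> = 1"
    using pdf by (subst nn_integral_eq_integral) (auto simp: bvn_pdf_nonneg has_bochner_integral_iff)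
  finally show "emeasure (bvn v r) (space (bvn v r)) = 1" .
qed

definition pair_coord :: "nat \<Rightarrow> real \<times> real \<Rightarrow> real" where
  "pair_coord j = (if even j then fst else snd)"

lemma borel_measurable_pair_coord[measurable]:
  "pair_coord j \<in> borel_measurable (lborel \<Otimes>\<^sub>M lborel)"
  unfolding pair_coord_def by auto

lemma has_bochner_integral_bvn_pair_coord:
  assumes "v > 0" and "\<bar>r\<bar> < 1"
  shows "has_bochner_integral (bvn v r) (pair_coord j) 0"
  using has_bochner_integral_bvn_quadratic[OF assms, of 0 1 0 0 0 0]
    has_bochner_integral_bvn_quadratic[OF assms, of 0 0 0 1 0 0]
  by (simp add: pair_coord_def)

lemma has_bochner_integral_bvn_pair_coord_mult:
  assumes "v > 0" and "\<bar>r\<bar> < 1"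
  shows "has_bochner_integral (bvn v r) (\<lambda>p. pair_coord i p * pair_coord j p)
           (v * (if even i = even j then 1 else r))"
proof -
  have "has_bochner_integral (bvn v r) (\<lambda>p. fst p * fst p) v"
    "has_bochner_integral (bvn v r) (\<lambda>p. snd p * snd p) v"
    "has_bochner_integral (bvn v r) (\<lambda>p. fst p * snd p) (v * r)"
    "has_bochner_integral (bvn v r) (\<lambda>p. snd p * fst p) (v * r)"
    using has_bochner_integral_bvn_quadratic[OF assms, of 0 0 1 0 0 0]
      has_bochner_integral_bvn_quadratic[OF assms, of 0 0 0 0 0 1]
      has_bochner_integral_bvn_quadratic[OF assms, of 0 0 0 0 1 0]
    by (simp_all add: power2_eq_square mult.commute)
  then show ?thesis
    by (cases "even i"; cases "even j") (auto simp: pair_coord_def)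
qed

lemma has_bochner_integral_pair_measure_mult:
  assumes "prob_space M1" "prob_space M2"
    and f: "has_bochner_integral M1 f a" and g: "has_bochner_integral M2 g b"
  shows "has_bochner_integral (M1 \<Otimes>\<^sub>M M2) (\<lambda>\<omega>. f (fst \<omega>) * g (snd \<omega>)) (a * (b::real))"
proof -
  interpret M1: prob_space M1 by fact
  interpret M2: prob_space M2 by fact
  interpret P: pair_sigma_finite M1 M2 ..
  have fi: "integrable M1 f" and gi: "integrable M2 g"
    and fa: "integral\<^sup>L M1 f = a" and gb: "integral\<^sup>L M2 g = b"
    using f g by (auto simp: has_bochner_integral_iff)
  have [measurable]: "f \<in> borel_measurable M1" "g \<in> borel_measurable M2"
    using fi gi by auto
  have int: "integrable (M1 \<Otimes>\<^sub>M M2) (\<lambda>\<omega>. f (fst \<omega>) * g (snd \<omega>))"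
  proof (rule P.Fubini_integrable)
    have "integrable M1 (\<lambda>x. norm (f x) * (\<integral>y. norm (g y) \<partial>M2))"
      using fi by auto
    then show "integrable M1 (\<lambda>x. \<integral>y. norm (f (fst (x, y)) * g (snd (x, y))) \<partial>M2)"
      by (simp add: abs_mult)
    show "AE x in M1. integrable M2 (\<lambda>y. f (fst (x, y)) * g (snd (x, y)))"
      using gi by auto
  qed measurable
  have "integral\<^sup>L (M1 \<Otimes>\<^sub>M M2) (\<lambda>\<omega>. f (fst \<omega>) * g (snd \<omega>)) = (\<integral>x. (\<integral>y. f x * g y \<partial>M2) \<partial>M1)"
    using P.integral_fst'[OF int] by simp
  also have "\<dots> = a * b"
    using fa gb by simp
  finally show ?thesis
    using int by (simp add: has_bochner_integral_iff)
qed

lemma has_bochner_integral_PiM_prod: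
  fixes f :: "'i \<Rightarrow> 'a \<Rightarrow> real"
  assumes N: "prob_space N" and I: "finite I" "J \<subseteq> I"
    and f: "\<And>k. k \<in> J \<Longrightarrow> has_bochner_integral N (f k) (a k)"
  shows "has_bochner_integral (PiM I (\<lambda>_. N)) (\<lambda>x. \<Prod>k\<in>J. f k (x k)) (\<Prod>k\<in>J. a k)"
proof -
  interpret N: prob_space N by fact
  interpret product_prob_space "\<lambda>_. N" I ..
  define g where "g k = (if k \<in> J then f k else (\<lambda>_. 1))" for k
  have g: "integrable N (g k)" for k
    using f by (auto simp: g_def has_bochner_integral_iff)
  have restrict: "(\<Prod>k\<in>I. h k) = (\<Prod>k\<in>J. h k)" if "\<And>k. k \<in> I - J \<Longrightarrow> h k = 1" for h :: "'i \<Rightarrow> real"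
    by (rule prod.mono_neutral_left[OF I, symmetric]) (use that in auto)
  have "(\<Prod>k\<in>I. g k (x k)) = (\<Prod>k\<in>J. f k (x k))" for x
    by (subst restrict) (auto simp: g_def)
  moreover have "(\<Prod>k\<in>I. integral\<^sup>L N (g k)) = (\<Prod>k\<in>J. a k)"
    by (subst restrict) (use f in \<open>auto simp: g_def N.prob_space has_bochner_integral_iff\<close>)
  moreover have "integrable (PiM I (\<lambda>_. N)) (\<lambda>x. \<Prod>k\<in>I. g k (x k))"
    by (rule product_integrable_prod[OF I(1) g])
  moreover have "(\<integral>x. (\<Prod>k\<in>I. g k (x k)) \<partial>PiM I (\<lambda>_. N)) = (\<Prod>k\<in>I. integral\<^sup>L N (g k))"
    by (rule product_integral_prod[OF I(1) g])
  ultimately show ?thesis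
    by (simp add: has_bochner_integral_iff)
qed

section \<open>Real-variable estimates\<close>

lemma ol_gain_identities:
  fixes d P Q G \<kappa> :: real
  assumes d: "0 < d" and G: "G * G = P / (2 * d)" and \<kappa>: "\<kappa> = G * d / Q"
  shows "\<kappa> * G = P / (2 * Q)" and "\<kappa> * \<kappa> = P * d / (2 * Q * Q)"
proof -
  have GGd: "G * G * d = P / 2"
    unfolding G using d by (simp add: field_simps)
  have "\<kappa> * G = G * G * d / Q" "\<kappa> * \<kappa> = G * G * d * d / (Q * Q)"
    unfolding \<kappa> by (simp_all add: mult_ac)
  then show "\<kappa> * G = P / (2 * Q)" "\<kappa> * \<kappa> = P * d / (2 * Q * Q)"
    unfolding GGd by (simp_all add: mult.commute)
qed

lemma ol_step_invariant:
  fixes \<alpha> d t rz :: real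
  assumes \<alpha>: "0 < \<alpha>" and d: "0 \<le> d" "d \<le> \<alpha>" and t: "0 < t" "t < 1" and rz: "\<bar>rz\<bar> < 1"
  defines "w \<equiv> t * (\<alpha> + d) / 2"
  shows "0 < \<alpha> - w"
    and "\<bar>d - w * (2 - rz - t * (1 - rz))\<bar> \<le> \<alpha> - w"
    and "\<alpha> - w \<le> \<alpha> * (1 - t / 2)"
proof -
  have "w \<le> t * \<alpha>"
    using t d unfolding w_def by (simp add: mult_left_mono)
  also have "\<dots> < \<alpha>"
    using t \<alpha> by simp
  finally show "0 < \<alpha> - w"
    by simp
  have "0 \<le> w * ((1 - rz) * (1 - t))"
    using t d \<alpha> rz unfolding w_def by simp
  moreover have "w * (3 - rz - t * (1 - rz)) \<le> \<alpha> + d"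
  proof -
    have "t * (1 - rz) \<le> 1 * (1 - rz)"
      using t rz by (intro mult_right_mono) auto
    then have "0 \<le> (1 - t) * (2 - t * (1 - rz))"
      using t rz by (intro mult_nonneg_nonneg) auto
    then have "t * (3 - rz - t * (1 - rz)) \<le> 2"
      by (simp add: algebra_simps)
    then have "(\<alpha> + d) * (t * (3 - rz - t * (1 - rz))) \<le> (\<alpha> + d) * 2"
      using \<alpha> d by (intro mult_left_mono) auto
    then show ?thesis
      unfolding w_def by (simp add: algebra_simps)
  qed
  ultimately show "\<bar>d - w * (2 - rz - t * (1 - rz))\<bar> \<le> \<alpha> - w"
    using d by (simp add: abs_le_iff algebra_simps)
  show "\<alpha> - w \<le> \<alpha> * (1 - t / 2)"
    using t d unfolding w_def by (simp add: algebra_simps)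
qed

lemma ln_one_minus_ge:
  fixes z :: real
  assumes "0 \<le> z" "z < 1"
  shows "- z / (1 - z) \<le> ln (1 - z)"
proof -
  have "ln (1 / (1 - z)) \<le> 1 / (1 - z) - 1"
    using assms by (intro ln_le_minus_one) simp
  moreover have "ln (1 / (1 - z)) = - ln (1 - z)" "1 / (1 - z) - 1 = z / (1 - z)"
    using assms by (simp_all add: ln_div field_simps)
  ultimately show ?thesis
    by simp
qed

lemma ln_ratio_antimono:
  fixes a x y :: real
  assumes "-1 < x" "x \<le> y" "y < a"
  shows "ln ((a - y) / (1 + y)) \<le> ln ((a - x) / (1 + x))"
proof -
  have "(a - x) * (1 + y) - (a - y) * (1 + x) = (y - x) * (a + 1)"
    by (simp add: algebra_simps)
  moreover have "0 \<le> (y - x) * (a + 1)"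
    using assms by simp
  ultimately have "(a - y) * (1 + x) \<le> (a - x) * (1 + y)"
    by linarith
  then have "(a - y) / (1 + y) \<le> (a - x) / (1 + x)"
    using assms by (simp add: divide_simps)
  then show ?thesis
    using assms by simp
qed

lemma cov_factor_bounds:
  fixes t rz :: real
  assumes "0 \<le> t" "t \<le> 1" "\<bar>rz\<bar> < 1"
  shows "1 \<le> 2 - rz - t * (1 - rz)" and "2 - rz - t * (1 - rz) \<le> 3"
proof -
  have "0 \<le> (1 - rz) * (1 - t)" "0 \<le> t * (1 - rz)"
    using assms by simp_all
  then show "1 \<le> 2 - rz - t * (1 - rz)" "2 - rz - t * (1 - rz) \<le> 3"
    using assms by (simp_all add: algebra_simps)
qed

text \<open>One step of the normalized error correlation \<open>\<rho>\<close> while it is large compared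
  with \<open>t = P / (P + \<sigma>\<^sub>z\<^sup>2)\<close>.\<close>
lemma ol_corr_step:
  fixes t rz \<rho> :: real
  assumes t: "0 < t" "t \<le> 1/100" and rz: "\<bar>rz\<bar> < 1" and \<rho>: "3 * t < \<rho>" "\<rho> \<le> 1"
  defines "w \<equiv> t * (1 + \<rho>) / 2" and "g \<equiv> 2 - rz - t * (1 - rz)"
  shows "w * g < \<rho>" and "\<rho> - (\<rho> - w * g) / (1 - w) \<le> 6 * t"
    and "t * (1 - rz) * (1 - t) / 2 \<le> \<rho> - (\<rho> - w * g) / (1 - w)"
proof -
  have w: "t / 2 \<le> w" "w \<le> t"
    using t \<rho> unfolding w_def by (auto simp: field_simps)
  have g: "g - 1 = (1 - rz) * (1 - t)" "1 \<le> g" "g \<le> 3"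
    using cov_factor_bounds[of t rz] t rz unfolding g_def by (simp_all add: algebra_simps)
  have "w * g \<le> t * 3"
    using w g t by (intro mult_mono) auto
  then show "w * g < \<rho>"
    using \<rho> by simp
  have diff: "\<rho> - (\<rho> - w * g) / (1 - w) = w * (g - \<rho>) / (1 - w)"
    using w t by (simp add: field_simps)
  have gr: "0 \<le> g - \<rho>" "g - \<rho> \<le> 3"
    using g \<rho> t by auto
  have "w * (g - \<rho>) / (1 - w) \<le> (t * 3) / (1 / 2)"
    using w gr t by (intro frac_le mult_mono) auto
  then show "\<rho> - (\<rho> - w * g) / (1 - w) \<le> 6 * t"
    unfolding diff by simp
  have "t / 2 * ((1 - rz) * (1 - t)) \<le> w * (g - \<rho>)"
    using w g \<rho> t rz by (intro mult_mono) auto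
  also have "\<dots> \<le> w * (g - \<rho>) / (1 - w)"
    using w gr t by (simp add: le_divide_eq mult_left_le)
  finally show "t * (1 - rz) * (1 - t) / 2 \<le> \<rho> - (\<rho> - w * g) / (1 - w)"
    unfolding diff by (simp add: mult_ac)
qed

lemma ol_corr_ratio_factor:
  fixes t rz \<rho> :: real
  defines "w \<equiv> t * (1 + \<rho>) / 2" and "g \<equiv> 2 - rz - t * (1 - rz)"
  defines "\<rho>' \<equiv> (\<rho> - w * g) / (1 - w)"
  assumes "w < 1" and "-1 < \<rho>" and "\<rho> < 2 - rz" and "t * (1 + g) / 2 < 1"
  shows "(2 - rz - \<rho>') / (1 + \<rho>')
    = (2 - rz - \<rho>) / (1 + \<rho>) * ((1 - w * t * (1 - rz) / (2 - rz - \<rho>)) / (1 - t * (1 + g) / 2))"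
proof -
  have num: "2 - rz - \<rho>' = (2 - rz - \<rho>) * (1 - w * t * (1 - rz) / (2 - rz - \<rho>)) / (1 - w)"
  proof -
    have "(N + \<rho>) - (\<rho> - w * ((N + \<rho>) - k)) / (1 - w) = N * (1 - w * k / N) / (1 - w)"
      if "N \<noteq> 0" for N k
      using that assms(4) by (simp add: field_simps)
    from this[of "2 - rz - \<rho>" "t * (1 - rz)"] show ?thesis
      using assms(6) unfolding \<rho>'_def g_def by (simp add: mult.assoc)
  qed
  have den: "1 + \<rho>' = (1 + \<rho>) * (1 - t * (1 + g) / 2) / (1 - w)"
    using assms(4) unfolding \<rho>'_def w_def by (simp add: field_simps)
  show ?thesis
    unfolding num den using assms(4-7) by simp
qed

lemma ol_corr_step_ln_gain:
  fixes t rz \<rho> :: real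
  assumes t: "0 < t" "t \<le> 1/100" and rz: "\<bar>rz\<bar> < 1" and \<rho>: "3 * t < \<rho>" "\<rho> \<le> 1"
  defines "a \<equiv> 2 - rz" and "w \<equiv> t * (1 + \<rho>) / 2" and "g \<equiv> 2 - rz - t * (1 - rz)"
  defines "\<rho>' \<equiv> (\<rho> - w * g) / (1 - w)"
  shows "t * (a + 1) / 2 * (1 - 3 * t) \<le> ln ((a - \<rho>') / (1 + \<rho>')) - ln ((a - \<rho>) / (1 + \<rho>))"
proof -
  define z where "z = w * t * (1 - rz) / (a - \<rho>)"
  define y where "y = t * (1 + g) / 2"
  have w: "0 \<le> w" "w \<le> t"
    using t \<rho> unfolding w_def by (auto simp: field_simps)
  have a\<rho>: "1 - rz \<le> a - \<rho>" "0 < 1 + \<rho>" "0 < 1 - rz"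
    using \<rho> t rz unfolding a_def by auto
  have "0 \<le> t * (1 + g)" "t * (1 + g) \<le> t * 4"
    using cov_factor_bounds[of t rz] t rz unfolding g_def by (auto intro: mult_left_mono)
  then have y: "0 \<le> y" "y < 1" "y = t * (a + 1) / 2 - t * t * (1 - rz) / 2"
    using t unfolding y_def g_def a_def by (linarith, linarith, simp add: field_simps)
  have "(1 - rz) / (a - \<rho>) \<le> 1"
    using a\<rho> by simp
  then have "w * t * ((1 - rz) / (a - \<rho>)) \<le> t * t * 1"
    using w t a\<rho> by (intro mult_mono) auto
  moreover have tt: "t * t \<le> 1 / 100"
    using t mult_mono[of t "1/100" t 1] by simp
  ultimately have "z \<le> t * t" "0 \<le> z"
    using w t a\<rho> unfolding z_def by simp_all
  with tt have z: "0 \<le> z" "z \<le> t * t" "z \<le> 1 / 2"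
    by simp_all
  have "ln ((a - \<rho>') / (1 + \<rho>')) = ln ((a - \<rho>) / (1 + \<rho>)) + ln (1 - z) - ln (1 - y)"
    using ol_corr_ratio_factor[of t \<rho> rz] w t a\<rho> y z
    unfolding a_def \<rho>'_def w_def g_def z_def y_def by (simp add: ln_mult ln_div)
  moreover have "- (2 * (t * t)) \<le> ln (1 - z)"
  proof -
    have "z / (1 - z) \<le> z / (1 / 2)"
      using z by (intro divide_left_mono) auto
    then show ?thesis
      using ln_one_minus_ge[of z] z by simp
  qed
  moreover have "y \<le> - ln (1 - y)"
    using ln_one_minus_pos_upper_bound[OF y(1,2)] by simp
  moreover have "t * t * (1 - rz) / 2 \<le> t * t" "3 * t * t * 1 \<le> 3 * t * t * ((a + 1) / 2)"
    using t rz mult_left_mono[of "1 - rz" 2 "t * t"] unfolding a_def by (auto intro: mult_left_mono)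
  moreover have "t * (a + 1) / 2 * (1 - 3 * t) = t * (a + 1) / 2 - 3 * t * t * ((a + 1) / 2)"
    by (simp add: field_simps)
  ultimately show ?thesis
    using y(3) by linarith
qed

section \<open>Second moments of the Gaussian sample\<close>

locale sym_gaussian_bc =
  fixes vs rs vz rz :: real
  assumes vs_pos: "vs > 0" and abs_rs_less: "\<bar>rs\<bar> < 1"
    and vz_pos: "vz > 0" and abs_rz_less: "\<bar>rz\<bar> < 1"
begin

abbreviation "sources \<equiv> PiM {..<1::nat} (\<lambda>_. bvn vs rs)"
abbreviation "noises n \<equiv> PiM {..<n::nat} (\<lambda>_. bvn vz rz)"

lemma prob_space_sources: "prob_space sources"
  by (intro prob_space_PiM prob_space_bvn vs_pos abs_rs_less)

lemma prob_space_noises: "prob_space (noises n)"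
  by (intro prob_space_PiM prob_space_bvn vz_pos abs_rz_less)

text \<open>With a single source pair, the sample is the Gaussian vector
  \<open>(S\<^sub>1, S\<^sub>2, Z\<^sub>1\<^sub>,\<^sub>0, Z\<^sub>2\<^sub>,\<^sub>0, \<dots>, Z\<^sub>1\<^sub>,\<^sub>n\<^sub>-\<^sub>1, Z\<^sub>2\<^sub>,\<^sub>n\<^sub>-\<^sub>1)\<close>, indexed by \<open>j < 2 + 2 n\<close>.\<close>
definition sample_coord :: "nat \<Rightarrow> (nat \<Rightarrow> real \<times> real) \<times> (nat \<Rightarrow> real \<times> real) \<Rightarrow> real" where
  "sample_coord j \<omega> =
     (if j < 2 then pair_coord j (fst \<omega> 0) else pair_coord j (snd \<omega> ((j - 2) div 2)))"

definition sample_cov :: "nat \<Rightarrow> nat \<Rightarrow> real" where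
  "sample_cov j l =
     (if j < 2 \<and> l < 2 then vs * (if even j = even l then 1 else rs)
      else if 2 \<le> j \<and> 2 \<le> l \<and> (j - 2) div 2 = (l - 2) div 2
      then vz * (if even j = even l then 1 else rz) else 0)"

lemma sample_cov_commute: "sample_cov j l = sample_cov l j"
  unfolding sample_cov_def by auto

lemma sample_coord_simps:
  "sample_coord 0 (s, z) = fst (s 0)" "sample_coord 1 (s, z) = snd (s 0)"
  "sample_coord (2 + 2 * i) (s, z) = fst (z i)" "sample_coord (3 + 2 * i) (s, z) = snd (z i)"
  by (simp_all add: sample_coord_def pair_coord_def)

lemma has_bochner_integral_source_coords_mult:
  assumes "j < 2" "l < 2"
  shows "has_bochner_integral (src_noise_space vs rs vz rz 1 n)
           (\<lambda>\<omega>. sample_coord j \<omega> * sample_coord l \<omega>) (sample_cov j l)"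
proof -
  have "has_bochner_integral sources (\<lambda>s. \<Prod>k\<in>{0::nat}. pair_coord j (s k) * pair_coord l (s k))
          (\<Prod>k\<in>{0::nat}. vs * (if even j = even l then 1 else rs))"
    by (intro has_bochner_integral_PiM_prod prob_space_bvn has_bochner_integral_bvn_pair_coord_mult
          vs_pos abs_rs_less) auto
  from has_bochner_integral_pair_measure_mult[OF prob_space_sources prob_space_noises this
      has_bochner_integral_PiM_prod[OF prob_space_bvn[OF vz_pos abs_rz_less], of "{..<n}" "{}"]]
  show ?thesis
    using assms by (simp add: src_noise_space_def sample_coord_def sample_cov_def)
qed

lemma has_bochner_integral_source_noise_coords_mult:
  assumes "j < 2" "2 \<le> l" "l < 2 + 2 * n"
  shows "has_bochner_integral (src_noise_space vs rs vz rz 1 n)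
           (\<lambda>\<omega>. sample_coord j \<omega> * sample_coord l \<omega>) (sample_cov j l)"
proof -
  have "has_bochner_integral sources (\<lambda>s. \<Prod>k\<in>{0::nat}. pair_coord j (s k)) (\<Prod>k\<in>{0::nat}. 0)"
    by (intro has_bochner_integral_PiM_prod prob_space_bvn has_bochner_integral_bvn_pair_coord
          vs_pos abs_rs_less) auto
  moreover have "has_bochner_integral (noises n) (\<lambda>z. \<Prod>k\<in>{(l - 2) div 2}. pair_coord l (z k))
      (\<Prod>k\<in>{(l - 2) div 2}. 0)"
    using assms
    by (intro has_bochner_integral_PiM_prod[where f = "\<lambda>_. pair_coord l"])
       (auto intro: prob_space_bvn has_bochner_integral_bvn_pair_coord vz_pos abs_rz_less)
  ultimately show ?thesis
    using has_bochner_integral_pair_measure_mult[OF prob_space_sources prob_space_noises] assms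
    by (fastforce simp: src_noise_space_def sample_coord_def sample_cov_def)
qed

lemma has_bochner_integral_noise_coords_mult:
  assumes "2 \<le> j" "j < 2 + 2 * n" "2 \<le> l" "l < 2 + 2 * n"
  shows "has_bochner_integral (src_noise_space vs rs vz rz 1 n)
           (\<lambda>\<omega>. sample_coord j \<omega> * sample_coord l \<omega>) (sample_cov j l)"
proof -
  define bj bl where "bj = (j - 2) div 2" and "bl = (l - 2) div 2"
  have blocks: "bj \<in> {..<n}" "bl \<in> {..<n}"
    using assms unfolding bj_def bl_def by auto
  have "has_bochner_integral (noises n) (\<lambda>z. pair_coord j (z bj) * pair_coord l (z bl)) (sample_cov j l)"
  proof (cases "bj = bl")
    case True
    have "has_bochner_integral (noises n) (\<lambda>z. \<Prod>k\<in>{bj}. pair_coord j (z k) * pair_coord l (z k))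
        (\<Prod>k\<in>{bj}. vz * (if even j = even l then 1 else rz))"
      using blocks
      by (intro has_bochner_integral_PiM_prod prob_space_bvn has_bochner_integral_bvn_pair_coord_mult
            vz_pos abs_rz_less) auto
    then show ?thesis
      using True assms by (simp add: sample_cov_def bj_def bl_def)
  next
    case False
    have "has_bochner_integral (noises n)
        (\<lambda>z. \<Prod>k\<in>{bj, bl}. (if k = bj then pair_coord j else pair_coord l) (z k)) (\<Prod>k\<in>{bj, bl}. 0)"
      using blocks
      by (intro has_bochner_integral_PiM_prod prob_space_bvn)
         (auto intro: has_bochner_integral_bvn_pair_coord vz_pos abs_rz_less)
    then show ?thesis
      using False assms by (simp add: sample_cov_def bj_def bl_def)
  qed
  from has_bochner_integral_pair_measure_mult[OF prob_space_sources prob_space_noises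
      has_bochner_integral_PiM_prod[OF prob_space_bvn[OF vs_pos abs_rs_less], of "{..<1}" "{}"] this]
  show ?thesis
    using assms by (simp add: src_noise_space_def sample_coord_def bj_def bl_def)
qed

lemma has_bochner_integral_sample_coord_mult:
  assumes "j < 2 + 2 * n" "l < 2 + 2 * n"
  shows "has_bochner_integral (src_noise_space vs rs vz rz 1 n)
           (\<lambda>\<omega>. sample_coord j \<omega> * sample_coord l \<omega>) (sample_cov j l)"
proof -
  consider "j < 2" "l < 2" | "j < 2" "2 \<le> l" | "2 \<le> j" "l < 2" | "2 \<le> j" "2 \<le> l"
    by linarith
  then show ?thesis
  proof cases
    case 3
    from has_bochner_integral_source_noise_coords_mult[OF 3(2,1) assms(1)] show ?thesis
      by (simp add: mult.commute sample_cov_commute)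
  qed (use assms has_bochner_integral_source_coords_mult has_bochner_integral_source_noise_coords_mult
         has_bochner_integral_noise_coords_mult in auto)
qed

definition sample_dim :: "nat \<Rightarrow> nat" where
  "sample_dim n = 2 + 2 * n"

definition lin_comb :: "nat \<Rightarrow> (nat \<Rightarrow> real) \<Rightarrow> (nat \<Rightarrow> real \<times> real) \<times> (nat \<Rightarrow> real \<times> real) \<Rightarrow> real" where
  "lin_comb n a \<omega> = (\<Sum>j<sample_dim n. a j * sample_coord j \<omega>)"

definition cov_form :: "nat \<Rightarrow> (nat \<Rightarrow> real) \<Rightarrow> (nat \<Rightarrow> real) \<Rightarrow> real" where
  "cov_form n a b = (\<Sum>j<sample_dim n. \<Sum>l<sample_dim n. a j * b l * sample_cov j l)"

lemma has_bochner_integral_lin_comb_mult: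
  "has_bochner_integral (src_noise_space vs rs vz rz 1 n)
     (\<lambda>\<omega>. lin_comb n a \<omega> * lin_comb n b \<omega>) (cov_form n a b)"
proof -
  have "has_bochner_integral (src_noise_space vs rs vz rz 1 n)
      (\<lambda>\<omega>. \<Sum>j<sample_dim n. \<Sum>l<sample_dim n. a j * b l * (sample_coord j \<omega> * sample_coord l \<omega>))
      (cov_form n a b)"
    unfolding cov_form_def
    by (intro has_bochner_integral_sum has_bochner_integral_mult_right
          has_bochner_integral_sample_coord_mult) (auto simp: sample_dim_def)
  then show ?thesis
    unfolding lin_comb_def sum_product by (simp only: mult_ac)
qed

lemma lin_comb_add: "lin_comb n (\<lambda>j. a j + b j) \<omega> = lin_comb n a \<omega> + lin_comb n b \<omega>"
  unfolding lin_comb_def by (simp add: algebra_simps sum.distrib)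

lemma lin_comb_diff: "lin_comb n (\<lambda>j. a j - b j) \<omega> = lin_comb n a \<omega> - lin_comb n b \<omega>"
  unfolding lin_comb_def by (simp add: algebra_simps sum_subtractf)

lemma lin_comb_scale: "lin_comb n (\<lambda>j. c * a j) \<omega> = c * lin_comb n a \<omega>"
  unfolding lin_comb_def by (simp add: sum_distrib_left mult_ac)

lemma cov_form_commute: "cov_form n a b = cov_form n b a"
  unfolding cov_form_def by (subst sum.swap) (simp add: sample_cov_commute mult_ac)

lemma cov_form_add_left: "cov_form n (\<lambda>j. a j + b j) c = cov_form n a c + cov_form n b c"
  unfolding cov_form_def by (simp add: algebra_simps sum.distrib)

lemma cov_form_scale_left: "cov_form n (\<lambda>j. k * a j) c = k * cov_form n a c"
  unfolding cov_form_def by (simp add: sum_distrib_left mult_ac)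

lemma cov_form_diff_left: "cov_form n (\<lambda>j. a j - b j) c = cov_form n a c - cov_form n b c"
  using cov_form_add_left[of n a "\<lambda>j. (-1) * b j" c] cov_form_scale_left[of n "-1" b c] by simp

lemma cov_form_add_right: "cov_form n c (\<lambda>j. a j + b j) = cov_form n c a + cov_form n c b"
  by (simp add: cov_form_commute[of n c] cov_form_add_left)

lemma cov_form_scale_right: "cov_form n c (\<lambda>j. k * a j) = k * cov_form n c a"
  by (simp add: cov_form_commute[of n c] cov_form_scale_left)

lemma cov_form_diff_right: "cov_form n c (\<lambda>j. a j - b j) = cov_form n c a - cov_form n c b"
  by (simp add: cov_form_commute[of n c] cov_form_diff_left)

lemmas cov_form_linear =
  cov_form_add_left cov_form_scale_left cov_form_diff_left
  cov_form_add_right cov_form_scale_right cov_form_diff_right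

definition unit_vec :: "nat \<Rightarrow> nat \<Rightarrow> real" where
  "unit_vec i = (\<lambda>j. if j = i then 1 else 0)"

lemma lin_comb_unit_vec: "i < sample_dim n \<Longrightarrow> lin_comb n (unit_vec i) \<omega> = sample_coord i \<omega>"
  unfolding lin_comb_def unit_vec_def by (simp add: if_distrib[of "\<lambda>x. x * _"] sum.delta cong: if_cong)

lemma cov_form_unit_vec_left:
  assumes "i < sample_dim n"
  shows "cov_form n (unit_vec i) b = (\<Sum>l<sample_dim n. b l * sample_cov i l)"
proof -
  have "cov_form n (unit_vec i) b
      = (\<Sum>j<sample_dim n. if j = i then (\<Sum>l<sample_dim n. b l * sample_cov i l) else 0)"
    unfolding cov_form_def unit_vec_def by (intro sum.cong refl) auto
  then show ?thesis
    using assms by (simp add: sum.delta)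
qed

lemma cov_form_unit_vec:
  assumes "i < sample_dim n" "j < sample_dim n"
  shows "cov_form n (unit_vec i) (unit_vec j) = sample_cov i j"
proof -
  have "cov_form n (unit_vec i) (unit_vec j) = (\<Sum>l<sample_dim n. if l = j then sample_cov i j else 0)"
    unfolding cov_form_unit_vec_left[OF assms(1)] by (intro sum.cong refl) (auto simp: unit_vec_def)
  then show ?thesis
    using assms by (simp add: sum.delta)
qed

definition vanishes_from :: "(nat \<Rightarrow> real) \<Rightarrow> nat \<Rightarrow> bool" where
  "vanishes_from a m \<longleftrightarrow> (\<forall>j\<ge>m. a j = 0)"

lemma cov_form_fresh_noise:
  assumes "vanishes_from a (2 + 2 * k)" "k < n" "i = 2 + 2 * k \<or> i = 3 + 2 * k"
  shows "cov_form n a (unit_vec i) = 0"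
proof -
  have "i < sample_dim n"
    using assms by (auto simp: sample_dim_def)
  then have "cov_form n a (unit_vec i) = (\<Sum>l<sample_dim n. a l * sample_cov i l)"
    by (subst cov_form_commute) (rule cov_form_unit_vec_left)
  also have "\<dots> = 0"
  proof (intro sum.neutral ballI)
    fix l
    have "sample_cov i l = 0" if "l < 2 + 2 * k"
      using that assms(3) by (auto simp: sample_cov_def)
    then show "a l * sample_cov i l = 0"
      using assms(1) by (cases "l < 2 + 2 * k") (auto simp: vanishes_from_def)
  qed
  finally show ?thesis .
qed

lemma cov_form_ol_input:
  fixes A B U V :: "nat \<Rightarrow> real" and G :: real
  assumes AA: "cov_form n A A = \<alpha>" and BB: "cov_form n B B = \<alpha>" and AB: "cov_form n A B = c"
    and AU: "cov_form n A U = 0" and BU: "cov_form n B U = 0"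
    and AV: "cov_form n A V = 0" and BV: "cov_form n B V = 0"
    and s: "s * s = 1" "s * c = \<bar>c\<bar>"
  defines "X \<equiv> \<lambda>j. G * (A j + s * B j)"
  shows "cov_form n X X = G * G * (2 * (\<alpha> + \<bar>c\<bar>))"
    and "cov_form n A X = G * (\<alpha> + \<bar>c\<bar>)" and "cov_form n B X = s * G * (\<alpha> + \<bar>c\<bar>)"
    and "cov_form n X U = 0" and "cov_form n X V = 0"
proof -
  have "cov_form n B A = c"
    using AB by (rule trans[OF cov_form_commute])
  note cov = AA BB AB AU BU AV BV this
  have sc: "c * s = \<bar>c\<bar>"
    using s(2) by (simp add: mult.commute)
  show "cov_form n X X = G * G * (2 * (\<alpha> + \<bar>c\<bar>))"
    unfolding X_def by (simp add: cov_form_linear cov) (simp add: algebra_simps s sc)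
  show "cov_form n A X = G * (\<alpha> + \<bar>c\<bar>)"
    unfolding X_def by (simp add: cov_form_linear cov s sc algebra_simps)
  have "s * \<bar>c\<bar> = c"
    using s by (metis mult.assoc mult_1)
  then show "cov_form n B X = s * G * (\<alpha> + \<bar>c\<bar>)"
    unfolding X_def by (simp add: cov_form_linear cov algebra_simps)
  show "cov_form n X U = 0" "cov_form n X V = 0"
    unfolding X_def by (simp_all add: cov_form_linear cov)
qed

text \<open>One step of the scheme at the level of coefficient vectors: \<open>A\<close>, \<open>B\<close> are the current
  estimation errors of the two receivers, \<open>X\<close> is the channel input, \<open>U\<close>, \<open>V\<close> the fresh noise.\<close>
lemma cov_form_ol_update:
  fixes A B U V :: "nat \<Rightarrow> real"
  assumes AA: "cov_form n A A = \<alpha>" and BB: "cov_form n B B = \<alpha>" and AB: "cov_form n A B = c"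
    and AU: "cov_form n A U = 0" and BU: "cov_form n B U = 0"
    and AV: "cov_form n A V = 0" and BV: "cov_form n B V = 0"
    and UU: "cov_form n U U = vz" and VV: "cov_form n V V = vz" and UV: "cov_form n U V = vz * rz"
    and s: "s * s = 1" "s * c = \<bar>c\<bar>"
    and d: "\<alpha> + \<bar>c\<bar> > 0" and P: "P > 0"
    and G: "G * G = P / (2 * (\<alpha> + \<bar>c\<bar>))" and \<kappa>: "\<kappa> = G * (\<alpha> + \<bar>c\<bar>) / (P + vz)"
  defines "X \<equiv> \<lambda>j. G * (A j + s * B j)"
  shows "cov_form n X X = P"
    and "cov_form n (\<lambda>j. A j - \<kappa> * (X j + U j)) (\<lambda>j. A j - \<kappa> * (X j + U j))
           = \<alpha> - P * (\<alpha> + \<bar>c\<bar>) / (2 * (P + vz))"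
    and "cov_form n (\<lambda>j. B j - s * \<kappa> * (X j + V j)) (\<lambda>j. B j - s * \<kappa> * (X j + V j))
           = \<alpha> - P * (\<alpha> + \<bar>c\<bar>) / (2 * (P + vz))"
    and "cov_form n (\<lambda>j. A j - \<kappa> * (X j + U j)) (\<lambda>j. B j - s * \<kappa> * (X j + V j))
           = c - s * (P * (\<alpha> + \<bar>c\<bar>) / (2 * (P + vz))) * (2 - (P + vz * rz) / (P + vz))"
proof -
  let ?d = "\<alpha> + \<bar>c\<bar>"
  note input = cov_form_ol_input[OF AA BB AB AU BU AV BV s, of G, folded X_def]
  have XX: "cov_form n X X = P"
    using input(1) d unfolding G by simp
  have "cov_form n B A = c" "cov_form n U A = 0" "cov_form n U B = 0" "cov_form n V A = 0"
    "cov_form n V B = 0" "cov_form n V U = vz * rz" "cov_form n X A = G * ?d"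
    "cov_form n X B = s * G * ?d" "cov_form n U X = 0" "cov_form n V X = 0"
    using AB AU BU AV BV UV input cov_form_commute by metis+
  note cov = AA BB AB AU BU AV BV UU VV UV XX input(2-5) this
  note \<kappa>G = ol_gain_identities(1)[OF d G \<kappa>] and \<kappa>\<kappa> = ol_gain_identities(2)[OF d G \<kappa>]
  have PV: "P + vz \<noteq> 0"
    using P vz_pos by simp
  have var_step: "a - 2 * (P / (2 * Q)) * ?d + P * ?d / (2 * Q * Q) * Q = a - P * ?d / (2 * Q)"
    if "Q \<noteq> 0" for a Q :: real
    using that by (simp add: field_simps)
  have cov_step: "c - s * (P / (2 * Q)) * ?d - s * (P / (2 * Q)) * ?d + s * (P * ?d / (2 * Q * Q)) * R
      = c - s * (P * ?d / (2 * Q)) * (2 - R / Q)" if "Q \<noteq> 0" for Q R :: real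
    using that by (simp add: field_simps)
  show "cov_form n X X = P"
    by (fact XX)
  have "cov_form n (\<lambda>j. A j - \<kappa> * (X j + U j)) (\<lambda>j. A j - \<kappa> * (X j + U j))
      = \<alpha> - 2 * (\<kappa> * G) * ?d + (\<kappa> * \<kappa>) * (P + vz)"
    by (simp add: cov_form_linear cov) (simp add: algebra_simps)
  then show "cov_form n (\<lambda>j. A j - \<kappa> * (X j + U j)) (\<lambda>j. A j - \<kappa> * (X j + U j))
      = \<alpha> - P * ?d / (2 * (P + vz))"
    unfolding \<kappa>G \<kappa>\<kappa> using var_step[OF PV] by simp
  have "cov_form n (\<lambda>j. B j - s * \<kappa> * (X j + V j)) (\<lambda>j. B j - s * \<kappa> * (X j + V j))
      = \<alpha> - 2 * (s * s) * (\<kappa> * G) * ?d + (s * s) * (\<kappa> * \<kappa>) * (P + vz)"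
    by (simp add: cov_form_linear cov) (simp add: algebra_simps)
  then show "cov_form n (\<lambda>j. B j - s * \<kappa> * (X j + V j)) (\<lambda>j. B j - s * \<kappa> * (X j + V j))
      = \<alpha> - P * ?d / (2 * (P + vz))"
    unfolding \<kappa>G \<kappa>\<kappa> s(1) using var_step[OF PV] by simp
  have "cov_form n (\<lambda>j. A j - \<kappa> * (X j + U j)) (\<lambda>j. B j - s * \<kappa> * (X j + V j))
      = c - s * (\<kappa> * G) * ?d - s * (\<kappa> * G) * ?d + s * (\<kappa> * \<kappa>) * (P + vz * rz)"
    by (simp add: cov_form_linear cov) (simp add: algebra_simps)
  then show "cov_form n (\<lambda>j. A j - \<kappa> * (X j + U j)) (\<lambda>j. B j - s * \<kappa> * (X j + V j))
      = c - s * (P * ?d / (2 * (P + vz))) * (2 - (P + vz * rz) / (P + vz))"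
    unfolding \<kappa>G \<kappa>\<kappa> using cov_step[OF PV] by simp
qed

end

section \<open>The Ozarow-Leung feedback scheme\<close>

lemma fb_out_stable: "i < k \<Longrightarrow> fb_out f s z k i = fb_out f s z (Suc i) i"
proof (induction k)
  case (Suc k)
  then show ?case
    by (cases "i = k") (simp_all add: Let_def)
qed simp

lemma fb_out_Suc_self:
  "fb_out f s z (Suc i) i = (f i s (fb_out f s z i) + fst (z i), f i s (fb_out f s z i) + snd (z i))"
  by (simp add: Let_def)

locale ol_scheme = sym_gaussian_bc +
  fixes P :: real
  assumes P_pos: "P > 0"
begin

definition snr_frac :: real where
  "snr_frac = P / (P + vz)"

lemma snr_frac_pos: "0 < snr_frac" and snr_frac_less_1: "snr_frac < 1"
  using P_pos vz_pos by (simp_all add: snr_frac_def)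

lemma P_eq_snr_frac: "P = vz * snr_frac / (1 - snr_frac)"
proof -
  have "1 - snr_frac = vz / (P + vz)"
    using P_pos vz_pos by (simp add: snr_frac_def field_simps)
  then show ?thesis
    using P_pos vz_pos by (simp add: snr_frac_def)
qed

text \<open>Error variance \<open>\<alpha>\<^sub>k\<close> of each receiver and covariance \<open>c\<^sub>k\<close> of the two receivers'
  errors after \<open>k\<close> channel uses.\<close>
fun err_state :: "nat \<Rightarrow> real \<times> real" where
  "err_state 0 = (vs, vs * rs)"
| "err_state (Suc k) =
     (let (a, c) = err_state k; w = snr_frac * (a + \<bar>c\<bar>) / 2
      in (a - w, c - (if c \<ge> 0 then 1 else -1) * w * (2 - rz - snr_frac * (1 - rz))))"

definition err_var :: "nat \<Rightarrow> real" where
  "err_var k = fst (err_state k)"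

definition err_cov :: "nat \<Rightarrow> real" where
  "err_cov k = snd (err_state k)"

definition cov_sign :: "nat \<Rightarrow> real" where
  "cov_sign k = (if err_cov k \<ge> 0 then 1 else -1)"

lemma err_var_0: "err_var 0 = vs" and err_cov_0: "err_cov 0 = vs * rs"
  by (simp_all add: err_var_def err_cov_def)

lemma err_var_Suc: "err_var (Suc k) = err_var k - snr_frac * (err_var k + \<bar>err_cov k\<bar>) / 2"
  and err_cov_Suc: "err_cov (Suc k) = err_cov k
      - cov_sign k * (snr_frac * (err_var k + \<bar>err_cov k\<bar>) / 2) * (2 - rz - snr_frac * (1 - rz))"
  by (simp_all add: err_var_def err_cov_def cov_sign_def split_beta Let_def)

lemma cov_sign_sq: "cov_sign k * cov_sign k = 1"
  and cov_sign_mult_err_cov: "cov_sign k * err_cov k = \<bar>err_cov k\<bar>"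
  by (auto simp: cov_sign_def)

definition input_gain :: "nat \<Rightarrow> real" where
  "input_gain k = sqrt (P / (2 * (err_var k + \<bar>err_cov k\<bar>)))"

definition est_gain :: "nat \<Rightarrow> real" where
  "est_gain k = input_gain k * (err_var k + \<bar>err_cov k\<bar>) / (P + vz)"

text \<open>Receiver \<open>i\<close> estimates \<open>S\<^sub>i\<close> by the \<open>est_gain\<close>-weighted sum of its outputs (with the
  signs \<open>cov_sign\<close> for receiver 2).  Through the feedback the encoder knows both current
  estimation errors and sends their sum, signed so that the two errors add coherently and
  scaled to input power \<open>P\<close>.\<close>
definition ol_enc :: encoder where
  "ol_enc k s y = input_gain k * ((fst (s 0) - (\<Sum>i<k. est_gain i * fst (y i)))
      + cov_sign k * (snd (s 0) - (\<Sum>i<k. cov_sign i * est_gain i * snd (y i))))"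

definition ol_dec1 :: "nat \<Rightarrow> (nat \<Rightarrow> real) \<Rightarrow> nat \<Rightarrow> real" where
  "ol_dec1 n y j = (\<Sum>i<n. est_gain i * y i)"

definition ol_dec2 :: "nat \<Rightarrow> (nat \<Rightarrow> real) \<Rightarrow> nat \<Rightarrow> real" where
  "ol_dec2 n y j = (\<Sum>i<n. cov_sign i * est_gain i * y i)"

fun err_coeffs :: "nat \<Rightarrow> (nat \<Rightarrow> real) \<times> (nat \<Rightarrow> real)" where
  "err_coeffs 0 = (unit_vec 0, unit_vec 1)"
| "err_coeffs (Suc k) =
     (let (A, B) = err_coeffs k; X = (\<lambda>j. input_gain k * (A j + cov_sign k * B j))
      in (\<lambda>j. A j - est_gain k * (X j + unit_vec (2 + 2 * k) j),
          \<lambda>j. B j - cov_sign k * est_gain k * (X j + unit_vec (3 + 2 * k) j)))"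

definition err1_coeffs :: "nat \<Rightarrow> nat \<Rightarrow> real" where
  "err1_coeffs k = fst (err_coeffs k)"

definition err2_coeffs :: "nat \<Rightarrow> nat \<Rightarrow> real" where
  "err2_coeffs k = snd (err_coeffs k)"

definition input_coeffs :: "nat \<Rightarrow> nat \<Rightarrow> real" where
  "input_coeffs k = (\<lambda>j. input_gain k * (err1_coeffs k j + cov_sign k * err2_coeffs k j))"

lemma err_coeffs_0: "err1_coeffs 0 = unit_vec 0" "err2_coeffs 0 = unit_vec 1"
  by (simp_all add: err1_coeffs_def err2_coeffs_def)

lemma err_coeffs_Suc:
  "err1_coeffs (Suc k) = (\<lambda>j. err1_coeffs k j - est_gain k * (input_coeffs k j + unit_vec (2 + 2 * k) j))"
  "err2_coeffs (Suc k) =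
     (\<lambda>j. err2_coeffs k j - cov_sign k * est_gain k * (input_coeffs k j + unit_vec (3 + 2 * k) j))"
  by (simp_all add: err1_coeffs_def err2_coeffs_def input_coeffs_def split_beta Let_def)

lemma sums_fb_out_stable:
  "(\<Sum>i<k. est_gain i * fst (fb_out f s z k i)) = (\<Sum>i<k. est_gain i * fst (fb_out f s z (Suc i) i))"
  "(\<Sum>i<k. cov_sign i * est_gain i * snd (fb_out f s z k i))
     = (\<Sum>i<k. cov_sign i * est_gain i * snd (fb_out f s z (Suc i) i))"
  by (intro sum.cong refl, subst fb_out_stable, auto simp del: fb_out.simps)+

lemma lin_comb_input_coeffs:
  "lin_comb n (input_coeffs k) \<omega>
     = input_gain k * (lin_comb n (err1_coeffs k) \<omega> + cov_sign k * lin_comb n (err2_coeffs k) \<omega>)"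
  unfolding input_coeffs_def by (simp add: lin_comb_scale lin_comb_add)

lemma lin_comb_err_coeffs:
  assumes "k \<le> n"
  shows "lin_comb n (err1_coeffs k) (s, z)
           = fst (s 0) - (\<Sum>i<k. est_gain i * fst (fb_out ol_enc s z (Suc i) i))"
    and "lin_comb n (err2_coeffs k) (s, z)
           = snd (s 0) - (\<Sum>i<k. cov_sign i * est_gain i * snd (fb_out ol_enc s z (Suc i) i))"
  using assms
proof (induction k)
  case 0
  have "0 < sample_dim n" "1 < sample_dim n"
    by (simp_all add: sample_dim_def)
  then show "lin_comb n (err1_coeffs 0) (s, z)
           = fst (s 0) - (\<Sum>i<0. est_gain i * fst (fb_out ol_enc s z (Suc i) i))"
    and "lin_comb n (err2_coeffs 0) (s, z)
           = snd (s 0) - (\<Sum>i<0. cov_sign i * est_gain i * snd (fb_out ol_enc s z (Suc i) i))"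
    by (simp_all add: err_coeffs_0 lin_comb_unit_vec sample_coord_def pair_coord_def)
next
  case (Suc k)
  assume "Suc k \<le> n"
  then have dims: "2 + 2 * k < sample_dim n" "3 + 2 * k < sample_dim n"
    by (simp_all add: sample_dim_def)
  from \<open>Suc k \<le> n\<close> have "k \<le> n"
    by simp
  note IH1 = Suc.IH(1)[OF this] and IH2 = Suc.IH(2)[OF this]
  have "ol_enc k s (fb_out ol_enc s z k) = lin_comb n (input_coeffs k) (s, z)"
    by (simp only: ol_enc_def[of k s] lin_comb_input_coeffs IH1 IH2 sums_fb_out_stable)
  then have out: "fb_out ol_enc s z (Suc k) k
      = (lin_comb n (input_coeffs k) (s, z) + fst (z k), lin_comb n (input_coeffs k) (s, z) + snd (z k))"
    by (simp only: fb_out_Suc_self)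
  show "lin_comb n (err1_coeffs (Suc k)) (s, z)
      = fst (s 0) - (\<Sum>i<Suc k. est_gain i * fst (fb_out ol_enc s z (Suc i) i))"
    unfolding err_coeffs_Suc lin_comb_diff lin_comb_scale lin_comb_add lin_comb_unit_vec[OF dims(1)]
      sample_coord_simps sum.lessThan_Suc IH1 out by simp
  show "lin_comb n (err2_coeffs (Suc k)) (s, z)
      = snd (s 0) - (\<Sum>i<Suc k. cov_sign i * est_gain i * snd (fb_out ol_enc s z (Suc i) i))"
    unfolding err_coeffs_Suc lin_comb_diff lin_comb_scale lin_comb_add lin_comb_unit_vec[OF dims(2)]
      sample_coord_simps sum.lessThan_Suc IH2 out by simp
qed

lemma chan_in_ol_enc:
  assumes "k < n"
  shows "chan_in ol_enc s z k = lin_comb n (input_coeffs k) (s, z)"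
proof -
  have "k \<le> n"
    using assms by simp
  then show ?thesis
    by (simp only: chan_in_def ol_enc_def[of k s] lin_comb_input_coeffs sums_fb_out_stable lin_comb_err_coeffs)
qed

lemma ol_dec1_error: "fst (s 0) - ol_dec1 n (rx1 ol_enc n s z) j = lin_comb n (err1_coeffs n) (s, z)"
proof -
  have "ol_dec1 n (rx1 ol_enc n s z) j = (\<Sum>i<n. est_gain i * fst (fb_out ol_enc s z n i))"
    unfolding ol_dec1_def rx1_def by (intro sum.cong) auto
  then show ?thesis
    by (simp add: sums_fb_out_stable lin_comb_err_coeffs del: fb_out.simps)
qed

lemma ol_dec2_error: "snd (s 0) - ol_dec2 n (rx2 ol_enc n s z) j = lin_comb n (err2_coeffs n) (s, z)"
proof -
  have "ol_dec2 n (rx2 ol_enc n s z) j = (\<Sum>i<n. cov_sign i * est_gain i * snd (fb_out ol_enc s z n i))"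
    unfolding ol_dec2_def rx2_def by (intro sum.cong) auto
  then show ?thesis
    by (simp add: sums_fb_out_stable lin_comb_err_coeffs del: fb_out.simps)
qed

lemma abs_err_cov_Suc:
  "\<bar>err_cov (Suc k)\<bar>
     = \<bar>\<bar>err_cov k\<bar> - snr_frac * (err_var k + \<bar>err_cov k\<bar>) / 2 * (2 - rz - snr_frac * (1 - rz))\<bar>"
proof -
  have "err_cov k = cov_sign k * \<bar>err_cov k\<bar>"
    by (simp add: cov_sign_def)
  then have "err_cov (Suc k) = cov_sign k
      * (\<bar>err_cov k\<bar> - snr_frac * (err_var k + \<bar>err_cov k\<bar>) / 2 * (2 - rz - snr_frac * (1 - rz)))"
    unfolding err_cov_Suc by (simp add: algebra_simps)
  then show ?thesis
    by (simp add: abs_mult cov_sign_def)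
qed

lemma err_state_invariant: "0 < err_var k \<and> \<bar>err_cov k\<bar> \<le> err_var k"
proof (induction k)
  case 0
  show ?case
    using vs_pos abs_rs_less by (simp add: err_var_0 err_cov_0 abs_mult mult_left_le)
next
  case (Suc k)
  then show ?case
    using ol_step_invariant[of "err_var k" "\<bar>err_cov k\<bar>" snr_frac rz]
      snr_frac_pos snr_frac_less_1 abs_rz_less
    unfolding err_var_Suc abs_err_cov_Suc by simp
qed

lemma err_var_pos: "0 < err_var k"
  using err_state_invariant by blast

lemma abs_err_cov_le: "\<bar>err_cov k\<bar> \<le> err_var k"
  using err_state_invariant by blast

lemma err_var_Suc_le: "err_var (Suc k) \<le> err_var k * (1 - snr_frac / 2)"
  using ol_step_invariant(3)[of "err_var k" "\<bar>err_cov k\<bar>" snr_frac rz]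
    err_var_pos abs_err_cov_le snr_frac_pos snr_frac_less_1 abs_rz_less
  unfolding err_var_Suc by simp

lemma err_coeffs_vanish:
  "vanishes_from (err1_coeffs k) (2 + 2 * k) \<and> vanishes_from (err2_coeffs k) (2 + 2 * k)"
  by (induction k) (auto simp: err_coeffs_0 err_coeffs_Suc vanishes_from_def unit_vec_def input_coeffs_def)

lemma cov_form_ol_step:
  assumes "k < n"
    and "cov_form n (err1_coeffs k) (err1_coeffs k) = err_var k"
    and "cov_form n (err2_coeffs k) (err2_coeffs k) = err_var k"
    and "cov_form n (err1_coeffs k) (err2_coeffs k) = err_cov k"
  shows "cov_form n (input_coeffs k) (input_coeffs k) = P"
    and "cov_form n (err1_coeffs (Suc k)) (err1_coeffs (Suc k)) = err_var (Suc k)"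
    and "cov_form n (err2_coeffs (Suc k)) (err2_coeffs (Suc k)) = err_var (Suc k)"
    and "cov_form n (err1_coeffs (Suc k)) (err2_coeffs (Suc k)) = err_cov (Suc k)"
proof -
  have d: "0 < err_var k + \<bar>err_cov k\<bar>"
    using err_var_pos[of k] by simp
  have dims: "2 + 2 * k < sample_dim n" "3 + 2 * k < sample_dim n"
    using assms(1) by (simp_all add: sample_dim_def)
  have fresh: "cov_form n (err1_coeffs k) (unit_vec (2 + 2 * k)) = 0"
    "cov_form n (err2_coeffs k) (unit_vec (2 + 2 * k)) = 0"
    "cov_form n (err1_coeffs k) (unit_vec (3 + 2 * k)) = 0"
    "cov_form n (err2_coeffs k) (unit_vec (3 + 2 * k)) = 0"
    using err_coeffs_vanish[of k] assms(1) by (auto intro!: cov_form_fresh_noise)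
  have noise: "cov_form n (unit_vec (2 + 2 * k)) (unit_vec (2 + 2 * k)) = vz"
    "cov_form n (unit_vec (3 + 2 * k)) (unit_vec (3 + 2 * k)) = vz"
    "cov_form n (unit_vec (2 + 2 * k)) (unit_vec (3 + 2 * k)) = vz * rz"
    using dims by (simp_all add: cov_form_unit_vec sample_cov_def)
  have G: "input_gain k * input_gain k = P / (2 * (err_var k + \<bar>err_cov k\<bar>))"
    using d P_pos unfolding input_gain_def by (simp add: real_sqrt_mult[symmetric])
  have w: "P * (err_var k + \<bar>err_cov k\<bar>) / (2 * (P + vz)) = snr_frac * (err_var k + \<bar>err_cov k\<bar>) / 2"
    by (simp add: snr_frac_def)
  have g: "2 - (P + vz * rz) / (P + vz) = 2 - rz - snr_frac * (1 - rz)"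
    using P_pos vz_pos by (simp add: snr_frac_def field_simps)
  note step = cov_form_ol_update[OF assms(2-4) fresh noise cov_sign_sq cov_sign_mult_err_cov d P_pos G
      est_gain_def]
  show "cov_form n (input_coeffs k) (input_coeffs k) = P"
    using step(1) by (simp add: input_coeffs_def)
  show "cov_form n (err1_coeffs (Suc k)) (err1_coeffs (Suc k)) = err_var (Suc k)"
    "cov_form n (err2_coeffs (Suc k)) (err2_coeffs (Suc k)) = err_var (Suc k)"
    "cov_form n (err1_coeffs (Suc k)) (err2_coeffs (Suc k)) = err_cov (Suc k)"
    using step(2-4) unfolding err_coeffs_Suc err_var_Suc err_cov_Suc input_coeffs_def w g by simp_all
qed

lemma cov_form_err_coeffs:
  assumes "k \<le> n"
  shows "cov_form n (err1_coeffs k) (err1_coeffs k) = err_var k"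
    and "cov_form n (err2_coeffs k) (err2_coeffs k) = err_var k"
    and "cov_form n (err1_coeffs k) (err2_coeffs k) = err_cov k"
  using assms
proof (induction k)
  case 0
  have "0 < sample_dim n" "1 < sample_dim n"
    by (simp_all add: sample_dim_def)
  then show "cov_form n (err1_coeffs 0) (err1_coeffs 0) = err_var 0"
    "cov_form n (err2_coeffs 0) (err2_coeffs 0) = err_var 0"
    "cov_form n (err1_coeffs 0) (err2_coeffs 0) = err_cov 0"
    by (simp_all add: err_coeffs_0 err_var_0 err_cov_0 cov_form_unit_vec sample_cov_def)
next
  case (Suc k)
  assume "Suc k \<le> n"
  then have "k < n" "k \<le> n"
    by simp_all
  note step = cov_form_ol_step[OF \<open>k < n\<close> Suc.IH[OF \<open>k \<le> n\<close>]]
  show "cov_form n (err1_coeffs (Suc k)) (err1_coeffs (Suc k)) = err_var (Suc k)"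
    "cov_form n (err2_coeffs (Suc k)) (err2_coeffs (Suc k)) = err_var (Suc k)"
    "cov_form n (err1_coeffs (Suc k)) (err2_coeffs (Suc k)) = err_cov (Suc k)"
    by (fact step(2), fact step(3), fact step(4))
qed

lemma cov_form_input_coeffs: "k < n \<Longrightarrow> cov_form n (input_coeffs k) (input_coeffs k) = P"
  using cov_form_ol_step(1) cov_form_err_coeffs[of k n] by simp

lemma ol_is_code: "is_code vs rs vz rz (err_var n) (real n * P) 1 n ol_enc (ol_dec1 n) (ol_dec2 n)"
proof -
  let ?M = "src_noise_space vs rs vz rz 1 n"
  have input: "integrable ?M (\<lambda>\<omega>. (chan_in ol_enc (fst \<omega>) (snd \<omega>) k)\<^sup>2)
      \<and> (\<integral>\<omega>. (chan_in ol_enc (fst \<omega>) (snd \<omega>) k)\<^sup>2 \<partial>?M) = P" if "k < n" for k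
  proof -
    have "(\<lambda>\<omega>. (chan_in ol_enc (fst \<omega>) (snd \<omega>) k)\<^sup>2)
        = (\<lambda>\<omega>. lin_comb n (input_coeffs k) \<omega> * lin_comb n (input_coeffs k) \<omega>)"
      using chan_in_ol_enc[OF that] by (simp add: power2_eq_square)
    then show ?thesis
      using has_bochner_integral_lin_comb_mult[of n "input_coeffs k" "input_coeffs k"]
        cov_form_input_coeffs[OF that]
      by (simp add: has_bochner_integral_iff)
  qed
  have "(\<lambda>\<omega>. (fst (fst \<omega> 0) - ol_dec1 n (rx1 ol_enc n (fst \<omega>) (snd \<omega>)) 0)\<^sup>2)
      = (\<lambda>\<omega>. lin_comb n (err1_coeffs n) \<omega> * lin_comb n (err1_coeffs n) \<omega>)"
    and "(\<lambda>\<omega>. (snd (fst \<omega> 0) - ol_dec2 n (rx2 ol_enc n (fst \<omega>) (snd \<omega>)) 0)\<^sup>2)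
      = (\<lambda>\<omega>. lin_comb n (err2_coeffs n) \<omega> * lin_comb n (err2_coeffs n) \<omega>)"
    using ol_dec1_error ol_dec2_error by (simp_all add: power2_eq_square)
  moreover have "has_bochner_integral ?M
      (\<lambda>\<omega>. lin_comb n (err1_coeffs n) \<omega> * lin_comb n (err1_coeffs n) \<omega>) (err_var n)"
    and "has_bochner_integral ?M
      (\<lambda>\<omega>. lin_comb n (err2_coeffs n) \<omega> * lin_comb n (err2_coeffs n) \<omega>) (err_var n)"
    using has_bochner_integral_lin_comb_mult[of n "err1_coeffs n" "err1_coeffs n"]
      has_bochner_integral_lin_comb_mult[of n "err2_coeffs n" "err2_coeffs n"]
      cov_form_err_coeffs[of n n]
    by simp_all
  ultimately show ?thesis
    using input by (simp add: is_code_def Let_def has_bochner_integral_iff)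
qed

definition err_corr :: "nat \<Rightarrow> real" where
  "err_corr k = \<bar>err_cov k\<bar> / err_var k"

text \<open>A Lyapunov function of the scheme; once the correlation has dropped it bounds the
  error variance.\<close>
definition err_potential :: "nat \<Rightarrow> real" where
  "err_potential k = (2 - rz) * err_var k - \<bar>err_cov k\<bar>"

lemma err_corr_nonneg: "0 \<le> err_corr k" and err_corr_le_1: "err_corr k \<le> 1"
  using err_var_pos[of k] abs_err_cov_le[of k] by (simp_all add: err_corr_def)

lemma err_corr_0: "err_corr 0 = \<bar>rs\<bar>"
  using vs_pos by (simp add: err_corr_def err_var_0 err_cov_0 abs_mult)

lemma err_potential_0: "err_potential 0 = vs * (2 - rz - \<bar>rs\<bar>)"
  using vs_pos by (simp add: err_potential_def err_var_0 err_cov_0 abs_mult algebra_simps)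

lemma abs_err_cov_eq: "\<bar>err_cov k\<bar> = err_corr k * err_var k"
  using err_var_pos[of k] by (simp add: err_corr_def)

lemma err_var_Suc_corr: "err_var (Suc k) = err_var k * (1 - snr_frac * (1 + err_corr k) / 2)"
  unfolding err_var_Suc abs_err_cov_eq[of k] by (simp add: algebra_simps)

lemma abs_err_cov_Suc_corr:
  "\<bar>err_cov (Suc k)\<bar> = err_var k
     * \<bar>err_corr k - snr_frac * (1 + err_corr k) / 2 * (2 - rz - snr_frac * (1 - rz))\<bar>"
proof -
  have "\<bar>err_cov k\<bar> - snr_frac * (err_var k + \<bar>err_cov k\<bar>) / 2 * (2 - rz - snr_frac * (1 - rz))
      = err_var k * (err_corr k - snr_frac * (1 + err_corr k) / 2 * (2 - rz - snr_frac * (1 - rz)))"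
    unfolding abs_err_cov_eq[of k] by (simp add: algebra_simps)
  then show ?thesis
    using err_var_pos[of k] unfolding abs_err_cov_Suc by (simp add: abs_mult)
qed

lemma err_potential_Suc_le: "err_potential (Suc k) \<le> err_potential k"
proof -
  let ?\<rho> = "err_corr k" and ?w = "snr_frac * (1 + err_corr k) / 2"
    and ?g = "2 - rz - snr_frac * (1 - rz)"
  have "err_var k * (?\<rho> - ?w * ?g) \<le> \<bar>err_cov (Suc k)\<bar>"
    unfolding abs_err_cov_Suc_corr using err_var_pos[of k] by (intro mult_left_mono) auto
  then have "err_potential (Suc k) \<le> (2 - rz) * (err_var k * (1 - ?w)) - err_var k * (?\<rho> - ?w * ?g)"
    unfolding err_potential_def err_var_Suc_corr by (rule diff_left_mono)
  also have "\<dots> = err_potential k - err_var k * ?w * (snr_frac * (1 - rz))"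
    unfolding err_potential_def abs_err_cov_eq[of k] by (simp add: field_simps)
  also have "\<dots> \<le> err_potential k"
    using err_var_pos[of k] err_corr_nonneg[of k] snr_frac_pos abs_rz_less by simp
  finally show ?thesis .
qed

lemma err_potential_le: "err_potential k \<le> err_potential 0"
  by (induction k) (auto intro: order_trans[OF err_potential_Suc_le])

lemma decseq_err_var: "decseq err_var"
proof (rule decseq_SucI)
  fix k
  have "err_var k * (1 - snr_frac / 2) \<le> err_var k"
    using err_var_pos[of k] snr_frac_pos by (simp add: algebra_simps)
  then show "err_var (Suc k) \<le> err_var k"
    using err_var_Suc_le[of k] by linarith
qed

lemma err_var_add_le: "err_var (K + j) \<le> err_var K * (1 - snr_frac / 2) ^ j"
proof (induction j)
  case (Suc j)
  have "err_var (K + Suc j) \<le> err_var (K + j) * (1 - snr_frac / 2)"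
    using err_var_Suc_le[of "K + j"] by simp
  also have "\<dots> \<le> err_var K * (1 - snr_frac / 2) ^ j * (1 - snr_frac / 2)"
    using Suc snr_frac_less_1 by (intro mult_right_mono) auto
  finally show ?case
    by (simp add: mult_ac)
qed simp

lemma err_corr_step:
  assumes t: "snr_frac \<le> 1/100" and \<rho>: "3 * snr_frac < err_corr k"
  shows "err_corr k - err_corr (Suc k) \<le> 6 * snr_frac"
    and "snr_frac * (1 - rz) * (1 - snr_frac) / 2 \<le> err_corr k - err_corr (Suc k)"
    and "snr_frac * (3 - rz) / 2 * (1 - 3 * snr_frac)
           \<le> ln ((2 - rz - err_corr (Suc k)) / (1 + err_corr (Suc k)))
             - ln ((2 - rz - err_corr k) / (1 + err_corr k))"
proof -
  let ?\<rho> = "err_corr k" and ?w = "snr_frac * (1 + err_corr k) / 2"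
    and ?g = "2 - rz - snr_frac * (1 - rz)"
  note step = ol_corr_step[OF snr_frac_pos t abs_rz_less \<rho> err_corr_le_1]
  have "snr_frac * (1 + ?\<rho>) \<le> snr_frac * 2"
    using err_corr_le_1[of k] snr_frac_pos by (intro mult_left_mono) auto
  then have "?w < 1"
    using t by simp
  then have "err_corr (Suc k) = (?\<rho> - ?w * ?g) / (1 - ?w)"
    using step(1) err_var_pos[of k]
    unfolding err_corr_def[of "Suc k"] abs_err_cov_Suc_corr err_var_Suc_corr by simp
  then show "err_corr k - err_corr (Suc k) \<le> 6 * snr_frac"
    and "snr_frac * (1 - rz) * (1 - snr_frac) / 2 \<le> err_corr k - err_corr (Suc k)"
    and "snr_frac * (3 - rz) / 2 * (1 - 3 * snr_frac)
           \<le> ln ((2 - rz - err_corr (Suc k)) / (1 + err_corr (Suc k)))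
             - ln ((2 - rz - err_corr k) / (1 + err_corr k))"
    using step(2,3) ol_corr_step_ln_gain[OF snr_frac_pos t abs_rz_less \<rho> err_corr_le_1]
    by (simp_all add: algebra_simps)
qed

lemma ex_err_corr_le:
  assumes t: "snr_frac \<le> 1/100" and \<theta>: "3 * snr_frac \<le> \<theta>"
  shows "\<exists>k. err_corr k \<le> \<theta>"
proof (rule ccontr)
  assume "\<nexists>k. err_corr k \<le> \<theta>"
  then have large: "3 * snr_frac < err_corr k" for k
    using \<theta> by (meson not_le order.strict_trans1)
  define \<delta> where "\<delta> = snr_frac * (1 - rz) * (1 - snr_frac) / 2"
  have "0 < \<delta>"
    using snr_frac_pos snr_frac_less_1 abs_rz_less by (simp add: \<delta>_def)
  have decrease: "err_corr k \<le> err_corr 0 - real k * \<delta>" for k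
  proof (induction k)
    case (Suc k)
    have "err_corr (Suc k) \<le> err_corr k - \<delta>"
      using err_corr_step(2)[OF t large[of k]] unfolding \<delta>_def by linarith
    moreover have "real (Suc k) * \<delta> = real k * \<delta> + \<delta>"
      by (simp add: distrib_right)
    ultimately show ?case
      using Suc by linarith
  qed simp
  obtain k where "1 < real k * \<delta>"
    using ex_less_of_nat_mult[OF \<open>0 < \<delta>\<close>] by blast
  then show False
    using decrease[of k] err_corr_le_1[of 0] err_corr_nonneg[of k] by linarith
qed

lemma ol_phase1_steps:
  assumes t: "snr_frac \<le> 1/100" and \<theta>: "3 * snr_frac \<le> \<theta>"
  obtains K where "err_corr K \<le> \<theta>" and "min \<bar>rs\<bar> (\<theta> - 6 * snr_frac) \<le> err_corr K"
    and "real K * (snr_frac * (3 - rz) / 2 * (1 - 3 * snr_frac))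
           \<le> ln ((2 - rz - err_corr K) / (1 + err_corr K)) - ln ((2 - rz - \<bar>rs\<bar>) / (1 + \<bar>rs\<bar>))"
proof -
  let ?h = "\<lambda>x. ln ((2 - rz - x) / (1 + x))"
  let ?c = "snr_frac * (3 - rz) / 2 * (1 - 3 * snr_frac)"
  define K where "K = (LEAST k. err_corr k \<le> \<theta>)"
  have K: "err_corr K \<le> \<theta>"
    unfolding K_def using ex_err_corr_le[OF t \<theta>] by (rule LeastI_ex)
  have before_K: "\<theta> < err_corr j" if "j < K" for j
    using not_less_Least[OF that[unfolded K_def]] by simp
  have "real j * ?c \<le> ?h (err_corr j) - ?h (err_corr 0)" if "j \<le> K" for j
    using that
  proof (induction j)
    case (Suc j)
    then have "3 * snr_frac < err_corr j"
      using before_K[of j] \<theta> by simp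
    moreover have "real (Suc j) * ?c = real j * ?c + ?c"
      by (simp add: distrib_right)
    ultimately show ?case
      using Suc err_corr_step(3)[OF t] by fastforce
  qed simp
  moreover have "min \<bar>rs\<bar> (\<theta> - 6 * snr_frac) \<le> err_corr K"
  proof (cases K)
    case (Suc j)
    then have "3 * snr_frac < err_corr j" "\<theta> < err_corr j"
      using before_K[of j] \<theta> by simp_all
    then show ?thesis
      using err_corr_step(1)[OF t] Suc by fastforce
  qed (simp add: err_corr_0)
  ultimately show ?thesis
    using that K by (simp add: err_corr_0)
qed

lemma ol_phase1:
  assumes t: "snr_frac \<le> 1/100" and \<rho>: "0 \<le> \<rho>" "\<rho> \<le> \<bar>rs\<bar>"
  obtains K where "err_corr K \<le> max \<rho> (3 * snr_frac)"
    and "real K * P \<le> 2 * vz / (3 - rz) * (ln ((2 - rz - \<rho> + 6 * snr_frac) / (1 + \<rho> - 6 * snr_frac))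
           - ln ((2 - rz - \<bar>rs\<bar>) / (1 + \<bar>rs\<bar>))) / ((1 - snr_frac) * (1 - 3 * snr_frac))"
proof -
  let ?t = snr_frac and ?h = "\<lambda>x. ln ((2 - rz - x) / (1 + x))"
  obtain K where K: "err_corr K \<le> max \<rho> (3 * ?t)" "min \<bar>rs\<bar> (max \<rho> (3 * ?t) - 6 * ?t) \<le> err_corr K"
    and gain: "real K * (?t * (3 - rz) / 2 * (1 - 3 * ?t)) \<le> ?h (err_corr K) - ?h \<bar>rs\<bar>"
    using ol_phase1_steps[OF t, of "max \<rho> (3 * ?t)"] by auto
  have "k * (vz * s / (1 - s)) = 2 * vz / (3 - rz) * (k * (s * (3 - rz) / 2 * (1 - 3 * s)))
      / ((1 - s) * (1 - 3 * s))" if "s < 1/3" for k s :: real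
  proof -
    have "2 * vz / (3 - rz) * (k * (s * (3 - rz) / 2 * (1 - 3 * s))) = k * (vz * s) * (1 - 3 * s)"
      using abs_rz_less by (simp add: field_simps)
    then show ?thesis
      using that by simp
  qed
  from this[of ?t "real K"]
  have "real K * P = 2 * vz / (3 - rz) * (real K * (?t * (3 - rz) / 2 * (1 - 3 * ?t)))
      / ((1 - ?t) * (1 - 3 * ?t))"
    using t by (simp add: P_eq_snr_frac[symmetric])
  also have "\<dots> \<le> 2 * vz / (3 - rz) * (ln ((2 - rz - \<rho> + 6 * ?t) / (1 + \<rho> - 6 * ?t)) - ?h \<bar>rs\<bar>)
      / ((1 - ?t) * (1 - 3 * ?t))"
  proof -
    have "\<rho> - 6 * ?t \<le> err_corr K"
      using K(2) \<rho> snr_frac_pos by (simp add: min_def split: if_splits)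
    then have "?h (err_corr K) \<le> ?h (\<rho> - 6 * ?t)"
      using \<rho> t err_corr_le_1[of K] abs_rz_less abs_rs_less by (intro ln_ratio_antimono) auto
    then have "?h (err_corr K) \<le> ln ((2 - rz - \<rho> + 6 * ?t) / (1 + \<rho> - 6 * ?t))"
      by (simp add: algebra_simps)
    then show ?thesis
      using gain t abs_rz_less vz_pos by (intro divide_right_mono mult_left_mono) auto
  qed
  finally show ?thesis
    using that K(1) by blast
qed

lemma err_var_le_of_err_corr_le:
  assumes "err_corr k \<le> \<theta>" "\<theta> < 2 - rz"
  shows "err_var k \<le> vs * (2 - rz - \<bar>rs\<bar>) / (2 - rz - \<theta>)"
proof -
  have "err_var k * (2 - rz - \<theta>) \<le> err_var k * (2 - rz - err_corr k)"
    using assms err_var_pos[of k] by (intro mult_left_mono) auto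
  also have "\<dots> = err_potential k"
    by (simp add: err_potential_def abs_err_cov_eq algebra_simps)
  also have "\<dots> \<le> vs * (2 - rz - \<bar>rs\<bar>)"
    using err_potential_le[of k] by (simp add: err_potential_0)
  finally show ?thesis
    using assms by (simp add: pos_le_divide_eq)
qed

lemma ol_phase2:
  assumes D: "0 < D" and A: "err_var K \<le> A"
  obtains L where "err_var (K + L) \<le> D"
    and "real L * P \<le> vz * (max 0 (2 * ln (A / D)) + snr_frac) / (1 - snr_frac)"
proof -
  let ?t = snr_frac
  have "0 < A"
    using err_var_pos[of K] A by simp
  define L where "L = nat \<lceil>2 * ln (A / D) / ?t\<rceil>"
  have L: "2 * ln (A / D) / ?t \<le> real L" "real L \<le> max 0 (2 * ln (A / D) / ?t) + 1"
    unfolding L_def by linarith+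
  have "(1 - ?t / 2) ^ L \<le> exp (- (?t / 2)) ^ L"
    using exp_ge_add_one_self[of "- (?t / 2)"] snr_frac_less_1 by (intro power_mono) auto
  also have "\<dots> = exp (- (?t / 2 * real L))"
    by (simp add: exp_of_nat_mult[symmetric] mult.commute)
  also have "\<dots> \<le> exp (- ln (A / D))"
    using L(1) snr_frac_pos by (simp add: field_simps)
  also have "\<dots> = D / A"
    using \<open>0 < A\<close> D by (simp add: exp_minus ln_div exp_diff)
  finally have decay: "(1 - ?t / 2) ^ L \<le> D / A" .
  have "err_var (K + L) \<le> err_var K * (1 - ?t / 2) ^ L"
    by (rule err_var_add_le)
  also have "\<dots> \<le> A * (D / A)"
    using A decay err_var_pos[of K] snr_frac_less_1 by (intro mult_mono) auto
  also have "\<dots> = D"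
    using \<open>0 < A\<close> by simp
  finally have "err_var (K + L) \<le> D" .
  moreover have "real L * P \<le> vz * (max 0 (2 * ln (A / D)) + ?t) / (1 - ?t)"
  proof -
    have "real L * P \<le> (max 0 (2 * ln (A / D) / ?t) + 1) * P"
      using L(2) P_pos by (intro mult_right_mono) auto
    also have "\<dots> = vz * (?t * max 0 (2 * ln (A / D) / ?t) + ?t) / (1 - ?t)"
      using snr_frac_less_1 by (subst P_eq_snr_frac) (simp add: field_simps)
    also have "?t * max 0 (2 * ln (A / D) / ?t) = max 0 (2 * ln (A / D))"
      using snr_frac_pos by (auto simp: max_def field_simps)
    finally show ?thesis .
  qed
  ultimately show ?thesis
    using that by blast
qed

end

section \<open>The energy-distortion tradeoff\<close>

text \<open>Energy per source pair of the scheme run with \<open>t = P / (P + \<sigma>\<^sub>z\<^sup>2)\<close>: the first phase lowers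
  the error correlation from \<open>|\<rho>\<^sub>s|\<close> to \<open>\<rho>\<close>, the second one lets the error variance decay
  to \<open>D\<close>; the last summand pays for one extra channel use.\<close>
definition ol_energy_bound :: "real \<Rightarrow> real \<Rightarrow> real \<Rightarrow> real \<Rightarrow> real \<Rightarrow> real \<Rightarrow> real \<Rightarrow> real" where
  "ol_energy_bound vs rs vz rz D \<rho> t =
     2 * vz / (3 - rz) * (ln ((2 - rz - \<rho> + 6 * t) / (1 + \<rho> - 6 * t))
                          - ln ((2 - rz - \<bar>rs\<bar>) / (1 + \<bar>rs\<bar>))) / ((1 - t) * (1 - 3 * t))
     + vz * (max 0 (2 * ln (vs * (2 - rz - \<bar>rs\<bar>) / (2 - rz - max \<rho> (3 * t)) / D)) + t) / (1 - t)
     + vz * t / (1 - t)"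

context ol_scheme
begin

lemma ol_scheme_reaches_distortion:
  assumes t: "snr_frac \<le> 1/100" and \<rho>: "0 \<le> \<rho>" "\<rho> \<le> \<bar>rs\<bar>" and D: "0 < D"
  shows "\<exists>m>0. err_var m \<le> D \<and> real m * P \<le> ol_energy_bound vs rs vz rz D \<rho> snr_frac"
proof -
  let ?t = snr_frac
  define A where "A = vs * (2 - rz - \<bar>rs\<bar>) / (2 - rz - max \<rho> (3 * ?t))"
  obtain K where K: "err_corr K \<le> max \<rho> (3 * ?t)"
    and phase1: "real K * P \<le> 2 * vz / (3 - rz) * (ln ((2 - rz - \<rho> + 6 * ?t) / (1 + \<rho> - 6 * ?t))
           - ln ((2 - rz - \<bar>rs\<bar>) / (1 + \<bar>rs\<bar>))) / ((1 - ?t) * (1 - 3 * ?t))"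
    using ol_phase1[OF t \<rho>] by blast
  have "err_var K \<le> A"
    unfolding A_def using \<rho> t abs_rs_less abs_rz_less by (intro err_var_le_of_err_corr_le[OF K]) auto
  then obtain L where L: "err_var (K + L) \<le> D"
    and phase2: "real L * P \<le> vz * (max 0 (2 * ln (A / D)) + ?t) / (1 - ?t)"
    using ol_phase2[OF D] by blast
  have "err_var (K + L + 1) \<le> D"
    using decseqD[OF decseq_err_var, of "K + L" "K + L + 1"] L by simp
  moreover have "real (K + L + 1) * P = real K * P + real L * P + vz * ?t / (1 - ?t)"
    by (simp add: algebra_simps P_eq_snr_frac[symmetric])
  ultimately show ?thesis
    using phase1 phase2 unfolding ol_energy_bound_def A_def[symmetric]
    by (intro exI[of _ "K + L + 1"]) auto
qed

end

lemma is_code_mono: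
  assumes "is_code vs rs vz rz D E m n f g1 g2" "D \<le> D'" "E \<le> E'"
  shows "is_code vs rs vz rz D' E' m n f g1 g2"
proof -
  have "real m * D \<le> real m * D'" "real m * E \<le> real m * E'"
    using assms(2,3) by (auto intro: mult_left_mono)
  then show ?thesis
    using assms(1) unfolding is_code_def Let_def by (meson order.trans)
qed

lemma achievable_nonneg:
  assumes "achievable vs rs vz rz D E"
  shows "0 \<le> E"
proof (rule field_le_epsilon)
  fix \<epsilon> :: real
  assume "0 < \<epsilon>"
  then obtain m n f g1 g2 where "0 < m" and code: "is_code vs rs vz rz (D + \<epsilon>) (E + \<epsilon>) m n f g1 g2"
    using assms unfolding achievable_def by blast
  have "0 \<le> (\<Sum>k<n. \<integral>\<omega>. (chan_in f (fst \<omega>) (snd \<omega>) k)\<^sup>2 \<partial>src_noise_space vs rs vz rz m n)"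
    by (intro sum_nonneg integral_nonneg) auto
  also have "\<dots> \<le> real m * (E + \<epsilon>)"
    using code unfolding is_code_def Let_def by blast
  finally show "0 \<le> E + \<epsilon>"
    using \<open>0 < m\<close> by (simp add: zero_le_mult_iff)
qed

lemma energy_distortion_le:
  assumes "\<And>\<epsilon>. 0 < \<epsilon> \<Longrightarrow> \<exists>m n f g1 g2. 0 < m \<and> 0 < n \<and> is_code vs rs vz rz D (E + \<epsilon>) m n f g1 g2"
  shows "energy_distortion vs rs vz rz D \<le> E"
proof -
  have "achievable vs rs vz rz D E"
    unfolding achievable_def
  proof (intro allI impI)
    fix \<epsilon> :: real
    assume "0 < \<epsilon>"
    then obtain m n f g1 g2 where "0 < m" "0 < n" and code: "is_code vs rs vz rz D (E + \<epsilon>) m n f g1 g2"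
      using assms by blast
    moreover have "is_code vs rs vz rz (D + \<epsilon>) (E + \<epsilon>) m n f g1 g2"
      using is_code_mono[OF code] \<open>0 < \<epsilon>\<close> by simp
    ultimately show "\<exists>m n f g1 g2. 0 < m \<and> 0 < n \<and> is_code vs rs vz rz (D + \<epsilon>) (E + \<epsilon>) m n f g1 g2"
      by blast
  qed
  moreover have "bdd_below {E. achievable vs rs vz rz D E}"
    unfolding bdd_below_def using achievable_nonneg by blast
  ultimately show ?thesis
    unfolding energy_distortion_def by (auto intro: cInf_lower)
qed

lemma continuous_ol_energy_bound:
  assumes "vs > 0" "\<bar>rs\<bar> < 1" "\<bar>rz\<bar> < 1" "0 < D" "0 \<le> \<rho>" "\<rho> \<le> \<bar>rs\<bar>"
  shows "continuous (at 0) (ol_energy_bound vs rs vz rz D \<rho>)"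
proof -
  have "0 < 2 - rz - \<rho>" "0 < 1 + \<rho>" "0 < 2 - rz - \<bar>rs\<bar>"
    using assms by auto
  then show ?thesis
    unfolding ol_energy_bound_def[abs_def] using assms
    by (intro continuous_intros) (auto simp: max_def)
qed

text \<open>Correlation at which the first phase stops: for \<open>D \<ge> D\<^sub>t\<^sub>h\<close> the potential bound then
  yields error variance \<open>D\<close> in the limit \<open>t \<rightarrow> 0\<close>, while for smaller \<open>D\<close> the first phase runs until
  the two errors are uncorrelated.\<close>
definition ol_threshold :: "real \<Rightarrow> real \<Rightarrow> real \<Rightarrow> real \<Rightarrow> real" where
  "ol_threshold vs rs rz D = max 0 (2 - rz - vs * (2 - rz - \<bar>rs\<bar>) / D)"

lemma ol_threshold_bounds:
  assumes "\<bar>rs\<bar> < 1" "\<bar>rz\<bar> < 1" "0 < D" "D \<le> vs"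
  shows "0 \<le> ol_threshold vs rs rz D" and "ol_threshold vs rs rz D \<le> \<bar>rs\<bar>"
proof -
  have "0 < 2 - rz - \<bar>rs\<bar>"
    using assms by simp
  then have "2 - rz - \<bar>rs\<bar> \<le> vs * (2 - rz - \<bar>rs\<bar>) / D"
    using assms by (simp add: le_divide_eq mult_right_mono)
  then show "0 \<le> ol_threshold vs rs rz D" "ol_threshold vs rs rz D \<le> \<bar>rs\<bar>"
    unfolding ol_threshold_def by auto
qed

lemma ol_energy_bound_at_0:
  assumes "0 \<le> \<rho>"
  shows "ol_energy_bound vs rs vz rz D \<rho> 0
    = 2 * vz / (3 - rz) * (ln ((2 - rz - \<rho>) / (1 + \<rho>)) - ln ((2 - rz - \<bar>rs\<bar>) / (1 + \<bar>rs\<bar>)))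
      + vz * max 0 (2 * ln (vs * (2 - rz - \<bar>rs\<bar>) / (2 - rz - \<rho>) / D))"
  using assms by (simp add: ol_energy_bound_def max_absorb1)

lemma ol_energy_bound_0_high:
  assumes vs: "vs > 0" and rs: "\<bar>rs\<bar> < 1" and rz: "\<bar>rz\<bar> < 1" and D: "D_th vs rs rz \<le> D"
  shows "ol_energy_bound vs rs vz rz D (ol_threshold vs rs rz D) 0 = E_OL vs rs vz rz D"
proof -
  define a b where "a = 2 - rz" and "b = \<bar>rs\<bar>"
  have a: "1 < a" and b: "0 \<le> b" and ab: "0 < a - b"
    using rz rs unfolding a_def b_def by auto
  have "vs * (a - b) / a \<le> D"
    using D unfolding D_th_def a_def b_def by (simp add: algebra_simps)
  then have "0 < D"
    using vs ab a by (smt (verit) divide_pos_pos mult_pos_pos)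
  define r where "r = a - vs * (a - b) / D"
  have "vs * (a - b) \<le> D * a"
    using \<open>vs * (a - b) / a \<le> D\<close> a by (simp add: divide_le_eq)
  then have "0 \<le> r"
    using \<open>0 < D\<close> unfolding r_def by (simp add: divide_le_eq mult.commute)
  then have thr: "ol_threshold vs rs rz D = r"
    unfolding ol_threshold_def r_def a_def b_def by simp
  have ar: "a - r = vs * (a - b) / D"
    unfolding r_def by simp
  have "v * N / Q / E / (N / B) = v * B / (Q * E)" if "N \<noteq> 0" "Q \<noteq> 0" "E \<noteq> 0" "B \<noteq> 0"
    for v N Q E B :: real
    using that by (simp add: field_simps)
  then have "(a - r) / (1 + r) / ((a - b) / (1 + b)) = vs * (1 + b) / (D * (1 + r))"
    using ab b \<open>0 \<le> r\<close> \<open>0 < D\<close> unfolding ar by simp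
  also have "D * (1 + r) = D + (2 - rz) * (D - vs) + vs * \<bar>rs\<bar>"
    using \<open>0 < D\<close> unfolding r_def a_def b_def by (simp add: field_simps)
  finally have ratio: "(a - r) / (1 + r) / ((a - b) / (1 + b))
      = vs * (1 + \<bar>rs\<bar>) / (D + (2 - rz) * (D - vs) + vs * \<bar>rs\<bar>)"
    unfolding b_def .
  have "0 < a - r"
    unfolding ar using vs ab \<open>0 < D\<close> by simp
  then have "ln ((a - r) / (1 + r)) - ln ((a - b) / (1 + b))
      = ln (vs * (1 + \<bar>rs\<bar>) / (D + (2 - rz) * (D - vs) + vs * \<bar>rs\<bar>))"
    unfolding ratio[symmetric] using ab b \<open>0 \<le> r\<close> by (simp add: ln_div ln_mult)
  moreover have "vs * (a - b) / (a - r) / D = 1"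
    unfolding ar using vs ab \<open>0 < D\<close> by simp
  ultimately show ?thesis
    unfolding thr ol_energy_bound_at_0[OF \<open>0 \<le> r\<close>] E_OL_def using D
    by (simp add: a_def b_def)
qed

lemma ol_energy_bound_0_low:
  assumes rs: "\<bar>rs\<bar> < 1" and rz: "\<bar>rz\<bar> < 1" and D: "0 < D" "D < D_th vs rs rz"
  shows "ol_energy_bound vs rs vz rz D (ol_threshold vs rs rz D) 0 = E_OL vs rs vz rz D"
proof -
  define a b where "a = 2 - rz" and "b = \<bar>rs\<bar>"
  have a: "1 < a" and b: "0 \<le> b" "b < 1" and ab: "0 < a - b"
    using rz rs unfolding a_def b_def by auto
  have "D * a < vs * (a - b)"
    using D a unfolding D_th_def a_def b_def by (simp add: less_divide_eq algebra_simps)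
  then have "a < vs * (a - b) / D"
    using D by (simp add: less_divide_eq mult.commute)
  then have thr: "ol_threshold vs rs rz D = 0"
    unfolding ol_threshold_def a_def b_def by simp
  have "1 < (a - b) * vs / (a * D)"
    using \<open>D * a < vs * (a - b)\<close> a D by (simp add: field_simps)
  then have "0 < ln ((a - b) * vs / (a * D))"
    by simp
  moreover have "vs * (a - b) / a / D = (a - b) * vs / (a * D)"
    by (simp add: field_simps)
  moreover have "ln a - ln ((a - b) / (1 + b)) = ln (a * (1 + b) / (a - b))"
    using a ab b by (simp add: ln_div ln_mult)
  ultimately show ?thesis
    unfolding thr ol_energy_bound_at_0[OF order_refl] E_OL_def using D
    by (simp add: a_def[symmetric] b_def[symmetric] algebra_simps)
qed

lemma (in sym_gaussian_bc) exists_ol_code: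
  assumes t: "0 < t" "t \<le> 1/100" and \<rho>: "0 \<le> \<rho>" "\<rho> \<le> \<bar>rs\<bar>" and D: "0 < D"
  shows "\<exists>n>0. \<exists>f g1 g2. is_code vs rs vz rz D (ol_energy_bound vs rs vz rz D \<rho> t) 1 n f g1 g2"
proof -
  define P where "P = vz * t / (1 - t)"
  interpret ol_scheme vs rs vz rz P
    by unfold_locales (use t vz_pos in \<open>simp add: P_def\<close>)
  have "P + vz = vz / (1 - t)"
    using t unfolding P_def by (simp add: field_simps)
  then have "snr_frac = t"
    using t vz_pos unfolding snr_frac_def by (simp add: P_def)
  then obtain n where "0 < n" "err_var n \<le> D" "real n * P \<le> ol_energy_bound vs rs vz rz D \<rho> t"
    using ol_scheme_reaches_distortion t \<rho> D by auto
  then show ?thesis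
    using is_code_mono[OF ol_is_code[of n]] by blast
qed

theorem theorem4:
  fixes vs rs vz rz D :: real
  assumes "vs > 0" and "\<bar>rs\<bar> < 1" and "vz > 0" and "\<bar>rz\<bar> < 1"
    and "0 < D" and "D \<le> vs"
  shows "energy_distortion vs rs vz rz D \<le> E_OL vs rs vz rz D"
proof (rule energy_distortion_le)
  interpret sym_gaussian_bc vs rs vz rz
    using assms by unfold_locales
  let ?\<rho> = "ol_threshold vs rs rz D"
  let ?F = "ol_energy_bound vs rs vz rz D ?\<rho>"
  note \<rho> = ol_threshold_bounds[OF assms(2,4-6)]
  have "isCont ?F 0"
    by (rule continuous_ol_energy_bound[OF assms(1,2,4,5) \<rho>])
  then have lim: "(?F \<longlongrightarrow> E_OL vs rs vz rz D) (at 0)"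
    unfolding continuous_at
    using ol_energy_bound_0_high[OF assms(1,2,4)] ol_energy_bound_0_low[OF assms(2,4,5)]
    by (cases "D_th vs rs rz \<le> D") auto
  fix \<epsilon> :: real
  assume "0 < \<epsilon>"
  then have "\<forall>\<^sub>F t in at 0. ?F t < E_OL vs rs vz rz D + \<epsilon>"
    using order_tendstoD(2)[OF lim] by simp
  then obtain d where "0 < d" and d: "\<And>t. t \<noteq> 0 \<Longrightarrow> dist t 0 < d \<Longrightarrow> ?F t < E_OL vs rs vz rz D + \<epsilon>"
    unfolding eventually_at by blast
  define t where "t = min (d / 2) (1 / 100)"
  have t: "0 < t" "t \<le> 1 / 100" "?F t < E_OL vs rs vz rz D + \<epsilon>"
    using \<open>0 < d\<close> d[of t] unfolding t_def by auto
  obtain n f g1 g2 where "0 < n" and code: "is_code vs rs vz rz D (?F t) 1 n f g1 g2"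
    using exists_ol_code[OF t(1,2) \<rho> assms(5)] by blast
  have "is_code vs rs vz rz D (E_OL vs rs vz rz D + \<epsilon>) 1 n f g1 g2"
    using is_code_mono[OF code order_refl] t(3) by simp
  then show "\<exists>m n f g1 g2. 0 < m \<and> 0 < n \<and> is_code vs rs vz rz D (E_OL vs rs vz rz D + \<epsilon>) m n f g1 g2"
    using \<open>0 < n\<close> by blast
qed

end
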